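(* Let $\varphi\colon A\to B$ and $\psi\colon B\to C$ be local homomorphisms of noetherian local rings with $\varphi$ surjective. Then $\operatorname{rd}(\psi\circ\varphi)=\operatorname{rd}(\varphi)+\operatorname{rd}(\psi)$.
   Context: All rings are commutative and noetherian with identity. A local homomorphism $\varphi\colon (A,m,K)\to(B,n,L)$ satisfies $\varphi(m)\subseteq n$. The regularity defect $\operatorname{rd}(\varphi)$ is the $L$-dimension of the kernel of the natural $L$-linear map $m/m^2\otimes_K L\to n/n^2$, $\bar x\otimes\bar b\mapsto \overline{\varphi(x)b}$. *)

theory Defs
  imports Main
begin

definition is_ideal :: "'a::comm_ring_1 set \<Rightarrow> bool" where
  "is_ideal I \<longleftrightarrow> 0 \<in> I \<and> (\<forall>x\<in>I. \<forall>y\<in>I. x + y \<in> I) \<and> (\<forall>r. \<forall>x\<in>I. r * x \<in> I)"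

definition ideal_gen :: "'a::comm_ring_1 set \<Rightarrow> 'a set" where
  "ideal_gen S = \<Inter> {I. is_ideal I \<and> S \<subseteq> I}"

definition maximal_ideal :: "'a::comm_ring_1 set \<Rightarrow> bool" where
  "maximal_ideal m \<longleftrightarrow> is_ideal m \<and> m \<noteq> UNIV \<and>
     (\<forall>J. is_ideal J \<and> m \<subseteq> J \<longrightarrow> J = m \<or> J = UNIV)"

definition noetherian_ring :: "'a::comm_ring_1 itself \<Rightarrow> bool" where
  "noetherian_ring _ \<longleftrightarrow> (\<forall>I::'a set. is_ideal I \<longrightarrow> (\<exists>S. finite S \<and> I = ideal_gen S))"

definition local_ring :: "'a::comm_ring_1 itself \<Rightarrow> bool" where
  "local_ring _ \<longleftrightarrow> (\<exists>!m::'a set. maximal_ideal m)"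

definition noetherian_local_ring :: "'a::comm_ring_1 itself \<Rightarrow> bool" where
  "noetherian_local_ring T \<longleftrightarrow> noetherian_ring T \<and> local_ring T"

definition max_ideal :: "'a::comm_ring_1 set" where
  "max_ideal = (THE m. maximal_ideal m)"

definition ideal_prod :: "'a::comm_ring_1 set \<Rightarrow> 'a set \<Rightarrow> 'a set" where
  "ideal_prod I J = ideal_gen {x * y | x y. x \<in> I \<and> y \<in> J}"

definition ring_hom :: "('a::comm_ring_1 \<Rightarrow> 'b::comm_ring_1) \<Rightarrow> bool" where
  "ring_hom f \<longleftrightarrow> f 1 = 1 \<and> (\<forall>x y. f (x + y) = f x + f y) \<and> (\<forall>x y. f (x * y) = f x * f y)"

definition local_hom :: "('a::comm_ring_1 \<Rightarrow> 'b::comm_ring_1) \<Rightarrow> bool" where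
  "local_hom f \<longleftrightarrow> ring_hom f \<and> f ` (max_ideal :: 'a set) \<subseteq> (max_ideal :: 'b set)"

text \<open>Construction of the L-vector space  m/m^2 \<otimes>_K L  by generators and relations,
  using representatives.  A formal sum  \<Sum> x_i \<otimes> b_i  (x_i \<in> m, b_i \<in> B) is a finitely
  supported function  f : A \<Rightarrow> B  with support in m; the B-module structure is pointwise.\<close>

definition delta :: "'a \<Rightarrow> 'b::zero \<Rightarrow> 'a \<Rightarrow> 'b" where
  "delta x b = (\<lambda>z. if z = x then b else 0)"

definition supp :: "('a \<Rightarrow> 'b::zero) \<Rightarrow> 'a set" where
  "supp f = {x. f x \<noteq> 0}"

definition formal_sums :: "('a::comm_ring_1 \<Rightarrow> 'b::comm_ring_1) set" where
  "formal_sums = {f. finite (supp f) \<and> supp f \<subseteq> max_ideal}"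

definition is_bsubmod :: "('a \<Rightarrow> 'b::comm_ring_1) set \<Rightarrow> bool" where
  "is_bsubmod U \<longleftrightarrow> (\<lambda>_. 0) \<in> U \<and> (\<forall>f\<in>U. \<forall>g\<in>U. (\<lambda>z. f z + g z) \<in> U)
      \<and> (\<forall>c. \<forall>f\<in>U. (\<lambda>z. c * f z) \<in> U)"

definition bspan :: "('a \<Rightarrow> 'b::comm_ring_1) set \<Rightarrow> ('a \<Rightarrow> 'b) set" where
  "bspan G = \<Inter> {U. is_bsubmod U \<and> G \<subseteq> U}"

text \<open>Relations: additivity in the first factor, K-balancedness (via \<phi>), vanishing
  of  x \<otimes> b  for b in the maximal ideal n of B (i.e. passage to L = B/n).  Together with the
  pointwise addition (additivity in the second factor) the quotient
  formal_sums / bspan(tensor_rels \<phi>) is  m \<otimes>_A B \<otimes>_B L = m/m^2 \<otimes>_K L.\<close>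
definition tensor_rels :: "('a::comm_ring_1 \<Rightarrow> 'b::comm_ring_1) \<Rightarrow> ('a \<Rightarrow> 'b) set" where
  "tensor_rels \<phi> =
     {(\<lambda>z. delta (x + y) b z - delta x b z - delta y b z) | x y b.
         x \<in> max_ideal \<and> y \<in> max_ideal}
   \<union> {(\<lambda>z. delta (a * x) b z - delta x (\<phi> a * b) z) | a x b. x \<in> max_ideal}
   \<union> {delta x b | x b. x \<in> max_ideal \<and> b \<in> max_ideal}"

text \<open>The natural map  m/m^2 \<otimes>_K L \<rightarrow> n/n^2,  x \<otimes> b \<mapsto> \<phi>(x) b,  on representatives.\<close>
definition nat_map :: "('a::comm_ring_1 \<Rightarrow> 'b::comm_ring_1) \<Rightarrow> ('a \<Rightarrow> 'b) \<Rightarrow> 'b" where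
  "nat_map \<phi> f = (\<Sum>x\<in>supp f. \<phi> x * f x)"

definition ker_reps :: "('a::comm_ring_1 \<Rightarrow> 'b::comm_ring_1) \<Rightarrow> ('a \<Rightarrow> 'b) set" where
  "ker_reps \<phi> = {f \<in> formal_sums. nat_map \<phi> f \<in> ideal_prod max_ideal max_ideal}"

text \<open>Regularity defect: the L-dimension of the kernel  ker_reps / bspan(tensor_rels),
  i.e. the least number of kernel elements spanning the kernel (modulo the relations).\<close>
definition rd :: "('a::comm_ring_1 \<Rightarrow> 'b::comm_ring_1) \<Rightarrow> nat" where
  "rd \<phi> = (LEAST k. \<exists>S. finite S \<and> card S = k \<and> S \<subseteq> ker_reps \<phi> \<and>
                         ker_reps \<phi> = bspan (tensor_rels \<phi> \<union> S))"

end

(*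
  Write \<chi> = \<psi> \<circ> \<phi>. Pushing formal sums forward along \<phi> maps the kernel of
  m\<^sub>A/m\<^sub>A\<^sup>2 \<otimes> L\<^sub>C \<rightarrow> m\<^sub>C/m\<^sub>C\<^sup>2 onto the kernel of m\<^sub>B/m\<^sub>B\<^sup>2 \<otimes> L\<^sub>C \<rightarrow> m\<^sub>C/m\<^sub>C\<^sup>2, because the
  surjective local map \<phi> maps m\<^sub>A onto m\<^sub>B. Hence rd \<chi> = dim W + rd \<psi>, where W is the
  kernel of this surjection.

  Modulo the relations, W is spanned by the symbols x \<otimes> c with \<phi> x = 0 together with the
  base change \<psi> \<circ> s of the kernel of m\<^sub>A/m\<^sub>A\<^sup>2 \<otimes> L\<^sub>B \<rightarrow> m\<^sub>B/m\<^sub>B\<^sup>2; the former lie in the span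
  of the latter, since x \<otimes> 1 is in the kernel for \<phi>. A minimal generating set of the
  kernel for \<phi> stays independent after base change: extend it to a basis of
  m\<^sub>A/m\<^sub>A\<^sup>2 \<otimes> L\<^sub>B and test with its coordinate functionals composed with \<psi>.
  So dim W = rd \<phi>.

  Vector spaces are handled through representatives: the dimension of V/R over the residue
  field is the minimal number of generators of V modulo R.
*)
theory Submission
  imports Defs "HOL-Library.Function_Algebras"
begin

section \<open>Ideals, local rings and ring homomorphisms\<close>

lemma ideal_zero: "is_ideal I \<Longrightarrow> 0 \<in> I"
  by (simp add: is_ideal_def)

lemma ideal_add: "is_ideal I \<Longrightarrow> x \<in> I \<Longrightarrow> y \<in> I \<Longrightarrow> x + y \<in> I"
  by (simp add: is_ideal_def)

lemma ideal_mult_left: "is_ideal I \<Longrightarrow> x \<in> I \<Longrightarrow> r * x \<in> I"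
  by (simp add: is_ideal_def)

lemma ideal_mult_right: "is_ideal I \<Longrightarrow> x \<in> I \<Longrightarrow> x * r \<in> I"
  by (metis ideal_mult_left mult.commute)

lemma ideal_uminus: "is_ideal I \<Longrightarrow> x \<in> I \<Longrightarrow> - x \<in> I"
  using ideal_mult_left[of I x "- 1"] by simp

lemma ideal_diff: "is_ideal I \<Longrightarrow> x \<in> I \<Longrightarrow> y \<in> I \<Longrightarrow> x - y \<in> I"
  using ideal_add[of I x "- y"] ideal_uminus[of I y] by simp

lemma ideal_sum: "is_ideal I \<Longrightarrow> (\<And>i. i \<in> A \<Longrightarrow> f i \<in> I) \<Longrightarrow> sum f A \<in> I"
  by (induction A rule: infinite_finite_induct) (auto intro: ideal_zero ideal_add)

lemma ideal_eq_UNIV_iff_one_mem: "is_ideal I \<Longrightarrow> I = UNIV \<longleftrightarrow> 1 \<in> I"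
  using ideal_mult_left[of I 1] by (metis UNIV_I UNIV_eq_I mult.right_neutral)

lemma is_ideal_ideal_gen: "is_ideal (ideal_gen S)"
  unfolding is_ideal_def
proof (intro conjI ballI allI)
  show "0 \<in> ideal_gen S" unfolding ideal_gen_def by (auto simp: is_ideal_def)
  fix x y assume "x \<in> ideal_gen S" "y \<in> ideal_gen S"
  then show "x + y \<in> ideal_gen S" unfolding ideal_gen_def by (auto simp: is_ideal_def)
next
  fix r x assume "x \<in> ideal_gen S"
  then show "r * x \<in> ideal_gen S" unfolding ideal_gen_def by (auto simp: is_ideal_def)
qed

lemma ideal_gen_least: "is_ideal J \<Longrightarrow> S \<subseteq> J \<Longrightarrow> ideal_gen S \<subseteq> J"
  unfolding ideal_gen_def by (rule Inter_lower) simp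

lemma ideal_gen_superset: "S \<subseteq> ideal_gen S"
  unfolding ideal_gen_def by (rule Inter_greatest) simp

lemma is_ideal_ideal_prod: "is_ideal (ideal_prod I J)"
  by (simp add: ideal_prod_def is_ideal_ideal_gen)

lemma mult_in_ideal_prod: "x \<in> I \<Longrightarrow> y \<in> J \<Longrightarrow> x * y \<in> ideal_prod I J"
  unfolding ideal_prod_def by (rule subsetD[OF ideal_gen_superset]) blast

lemma is_ideal_principal: "is_ideal {r * x | r. True}"
  unfolding is_ideal_def
  by (auto simp: distrib_right[symmetric] mult.assoc[symmetric] intro: exI[of _ 0])

lemma is_ideal_Union_chain:
  assumes "C \<noteq> {}" "\<forall>I\<in>C. is_ideal I" "\<forall>I\<in>C. \<forall>J\<in>C. I \<subseteq> J \<or> J \<subseteq> I"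
  shows "is_ideal (\<Union>C)"
  unfolding is_ideal_def
proof (intro conjI ballI allI)
  show "0 \<in> \<Union>C" using assms(1,2) ideal_zero by blast
  fix x y assume "x \<in> \<Union>C" "y \<in> \<Union>C"
  then obtain I J where "I \<in> C" "x \<in> I" "J \<in> C" "y \<in> J" by blast
  with assms(2,3) show "x + y \<in> \<Union>C" by (metis UnionI ideal_add subsetD)
next
  fix r x assume "x \<in> \<Union>C"
  with assms(2) show "r * x \<in> \<Union>C" using ideal_mult_left by blast
qed

lemma ideal_in_maximal_ideal:
  assumes I: "is_ideal I" and one: "(1::'a::comm_ring_1) \<notin> I"
  shows "\<exists>M. maximal_ideal M \<and> I \<subseteq> M"
proof -
  define A where "A = {J::'a set. is_ideal J \<and> I \<subseteq> J \<and> 1 \<notin> J}"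
  have "\<forall>C\<in>chains A. \<exists>U\<in>A. \<forall>J\<in>C. J \<subseteq> U"
  proof
    fix C assume C: "C \<in> chains A"
    show "\<exists>U\<in>A. \<forall>J\<in>C. J \<subseteq> U"
    proof (cases "C = {}")
      case True
      then show ?thesis using I one unfolding A_def by blast
    next
      case False
      with C have "is_ideal (\<Union>C)"
        by (intro is_ideal_Union_chain) (auto simp: chains_def chain_subset_def A_def)
      with C False have "\<Union>C \<in> A" by (auto simp: chains_def A_def)
      then show ?thesis by blast
    qed
  qed
  then obtain M where M: "M \<in> A" and Mmax: "\<forall>J\<in>A. M \<subseteq> J \<longrightarrow> J = M"
    using Zorn_Lemma2 by blast
  have "maximal_ideal M"
    unfolding maximal_ideal_def
  proof (intro conjI allI impI)
    show "is_ideal M" "M \<noteq> UNIV" using M unfolding A_def by auto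
    fix J assume J: "is_ideal J \<and> M \<subseteq> J"
    show "J = M \<or> J = UNIV"
      using J M Mmax ideal_eq_UNIV_iff_one_mem[of J] unfolding A_def by blast
  qed
  then show ?thesis using M unfolding A_def by blast
qed

lemma maximal_ideal_max_ideal:
  "local_ring TYPE('a::comm_ring_1) \<Longrightarrow> maximal_ideal (max_ideal :: 'a set)"
  unfolding local_ring_def max_ideal_def by (rule theI')

lemma maximal_ideal_eq_max_ideal:
  "local_ring TYPE('a::comm_ring_1) \<Longrightarrow> maximal_ideal (M :: 'a set) \<Longrightarrow> M = max_ideal"
  unfolding local_ring_def max_ideal_def by (metis the_equality)

lemma is_ideal_max_ideal: "local_ring TYPE('a::comm_ring_1) \<Longrightarrow> is_ideal (max_ideal :: 'a set)"
  using maximal_ideal_max_ideal maximal_ideal_def by blast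

lemma one_notin_max_ideal: "local_ring TYPE('a::comm_ring_1) \<Longrightarrow> (1::'a) \<notin> max_ideal"
  using maximal_ideal_max_ideal ideal_eq_UNIV_iff_one_mem is_ideal_max_ideal
  unfolding maximal_ideal_def by blast

lemma unit_notin_max_ideal:
  "local_ring TYPE('a::comm_ring_1) \<Longrightarrow> u * x = 1 \<Longrightarrow> (x::'a) \<notin> max_ideal"
  using ideal_mult_left[OF is_ideal_max_ideal, of x u] one_notin_max_ideal by metis

lemma notin_max_ideal_imp_unit:
  assumes l: "local_ring TYPE('a::comm_ring_1)" and x: "(x::'a) \<notin> max_ideal"
  shows "\<exists>u. u * x = 1"
proof (rule ccontr)
  assume "\<nexists>u. u * x = 1"
  then have "1 \<notin> {r * x | r. True}" by auto
  then obtain M where "maximal_ideal M" and xM: "{r * x | r. True} \<subseteq> M"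
    using ideal_in_maximal_ideal[OF is_ideal_principal] by blast
  then have "M = max_ideal" using maximal_ideal_eq_max_ideal[OF l] by blast
  moreover have "x \<in> M" using xM by (metis (mono_tags) mem_Collect_eq mult_1 subsetD)
  ultimately show False using x by blast
qed

lemma mult_notin_max_ideal:
  assumes l: "local_ring TYPE('a::comm_ring_1)" and "(x::'a) \<notin> max_ideal" "y \<notin> max_ideal"
  shows "x * y \<notin> max_ideal"
proof -
  obtain u v where "u * x = 1" "v * y = 1" using notin_max_ideal_imp_unit[OF l] assms by metis
  then have "(u * v) * (x * y) = 1" by (metis mult.assoc mult.left_commute mult_1)
  then show ?thesis using unit_notin_max_ideal[OF l] by blast
qed

lemma ring_hom_add: "ring_hom f \<Longrightarrow> f (x + y) = f x + f y" by (simp add: ring_hom_def)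
lemma ring_hom_mult: "ring_hom f \<Longrightarrow> f (x * y) = f x * f y" by (simp add: ring_hom_def)
lemma ring_hom_one: "ring_hom f \<Longrightarrow> f 1 = 1" by (simp add: ring_hom_def)
lemma ring_hom_zero: "ring_hom f \<Longrightarrow> f 0 = 0"
  using ring_hom_add[of f 0 0] by simp
lemma ring_hom_uminus: "ring_hom f \<Longrightarrow> f (- x) = - f x"
  using ring_hom_add[of f x "- x"] ring_hom_zero[of f]
    by (simp add: eq_neg_iff_add_eq_0 add.commute)
lemma ring_hom_diff: "ring_hom f \<Longrightarrow> f (x - y) = f x - f y"
  using ring_hom_add[of f x "- y"] ring_hom_uminus[of f y] by simp
lemma ring_hom_sum: "ring_hom f \<Longrightarrow> f (\<Sum>i\<in>A. g i) = (\<Sum>i\<in>A. f (g i))"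
  by (induction A rule: infinite_finite_induct) (simp_all add: ring_hom_zero ring_hom_add)
lemma ring_hom_comp: "ring_hom f \<Longrightarrow> ring_hom g \<Longrightarrow> ring_hom (g \<circ> f)"
  by (simp add: ring_hom_def)

lemma local_hom_ring_hom: "local_hom f \<Longrightarrow> ring_hom f" by (simp add: local_hom_def)
lemma local_hom_max_ideal: "local_hom f \<Longrightarrow> x \<in> max_ideal \<Longrightarrow> f x \<in> max_ideal"
  unfolding local_hom_def by blast

section \<open>Finitely supported functions\<close>

definition smul :: "'b::comm_ring_1 \<Rightarrow> ('a \<Rightarrow> 'b) \<Rightarrow> 'a \<Rightarrow> 'b" where
  "smul c f = (\<lambda>z. c * f z)"

lemma smul_apply: "smul c f z = c * f z" by (simp add: smul_def)
lemma smul_add_right: "smul c (f + g) = smul c f + smul c g"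
  by (rule ext) (simp add: smul_apply distrib_left)
lemma smul_add_left: "smul (a + b) f = smul a f + smul b f"
  by (rule ext) (simp add: smul_apply distrib_right)
lemma smul_diff_right: "smul c (f - g) = smul c f - smul c g"
  by (rule ext) (simp add: smul_apply right_diff_distrib)
lemma smul_diff_left: "smul (a - b) f = smul a f - smul b f"
  by (rule ext) (simp add: smul_apply left_diff_distrib)
lemma smul_uminus_left: "smul (- a) f = - smul a f"
  by (rule ext) (simp add: smul_apply)
lemma smul_smul: "smul a (smul b f) = smul (a * b) f"
  by (rule ext) (simp add: smul_apply mult.assoc)
lemma smul_one[simp]: "smul 1 f = f" by (rule ext) (simp add: smul_apply)
lemma smul_zero_left[simp]: "smul 0 f = 0" by (rule ext) (simp add: smul_apply)
lemma sum_apply: "(\<Sum>i\<in>A. f i) x = (\<Sum>i\<in>A. f i x)"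
  by (induction A rule: infinite_finite_induct) auto
lemma smul_sum_right: "smul c (\<Sum>i\<in>A. f i) = (\<Sum>i\<in>A. smul c (f i))"
  by (rule ext) (simp add: smul_apply sum_apply sum_distrib_left)
lemma smul_sum_left: "smul (\<Sum>i\<in>A. a i) f = (\<Sum>i\<in>A. smul (a i) f)"
  by (rule ext) (simp add: smul_apply sum_apply sum_distrib_right)

lemma delta_zero[simp]: "delta x (0::'b::zero) = 0" by (rule ext) (simp add: delta_def)
lemma delta_add: "delta x ((a::'b::monoid_add) + b) = delta x a + delta x b"
  by (rule ext) (simp add: delta_def)
lemma smul_delta: "smul c (delta x b) = delta x (c * (b::'b::comm_ring_1))"
  by (rule ext) (simp add: smul_apply delta_def)

lemma supp_add: "supp (f + g) \<subseteq> supp f \<union> supp (g::'a \<Rightarrow> 'b::monoid_add)"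
  by (auto simp: supp_def)
lemma supp_diff: "supp (f - g) \<subseteq> supp f \<union> supp (g::'a \<Rightarrow> 'b::ab_group_add)"
  by (auto simp: supp_def)
lemma supp_uminus[simp]: "supp (- f) = supp (f::'a \<Rightarrow> 'b::ab_group_add)"
  by (auto simp: supp_def)
lemma supp_smul: "supp (smul c f) \<subseteq> supp f"
  by (auto simp: supp_def smul_apply)
lemma supp_delta: "supp (delta x (b::'b::zero)) \<subseteq> {x}"
  by (auto simp: supp_def delta_def)
lemma supp_zero[simp]: "supp (0::'a \<Rightarrow> 'b::zero) = {}"
  by (auto simp: supp_def)
lemma finite_supp_add:
  "finite (supp f) \<Longrightarrow> finite (supp g) \<Longrightarrow> finite (supp (f + (g::'a \<Rightarrow> 'b::monoid_add)))"
  by (meson finite_UnI finite_subset supp_add)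
lemma finite_supp_diff:
  "finite (supp f) \<Longrightarrow> finite (supp g) \<Longrightarrow> finite (supp (f - (g::'a \<Rightarrow> 'b::ab_group_add)))"
  by (meson finite_UnI finite_subset supp_diff)
lemma finite_supp_smul: "finite (supp f) \<Longrightarrow> finite (supp (smul c f))"
  by (meson finite_subset supp_smul)
lemma finite_supp_delta: "finite (supp (delta x (b::'b::zero)))"
  by (meson finite.emptyI finite_insert finite_subset supp_delta)
lemma finite_supp_sum:
  "(\<And>i. i \<in> A \<Longrightarrow> finite (supp (f i))) \<Longrightarrow> finite (supp (\<Sum>i\<in>A. f i :: 'a \<Rightarrow> 'b::comm_monoid_add))"
  by (induction A rule: infinite_finite_induct) (auto intro: finite_supp_add)

lemma supp_decomposition_superset:
  assumes "finite T" "supp f \<subseteq> T"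
  shows "f = (\<Sum>x\<in>T. delta x (f x))"
proof (rule ext)
  fix z
  have "(\<Sum>x\<in>T. delta x (f x)) z = (\<Sum>x\<in>T. if z = x then f x else 0)"
    by (simp add: sum_apply delta_def)
  also have "\<dots> = f z"
  proof (cases "z \<in> T")
    case True then show ?thesis using assms(1) by (simp add: sum.delta)
  next
    case False then have "f z = 0" using assms(2) by (auto simp: supp_def)
    then show ?thesis using False assms(1) by (simp add: sum.delta)
  qed
  finally show "f z = (\<Sum>x\<in>T. delta x (f x)) z" by simp
qed

lemma supp_decomposition: "finite (supp f) \<Longrightarrow> f = (\<Sum>x\<in>supp f. delta x (f x))"
  by (rule supp_decomposition_superset) auto

lemma nat_map_superset:
  assumes "finite T" "supp f \<subseteq> T"
  shows "nat_map h f = (\<Sum>x\<in>T. h x * f x)"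
  unfolding nat_map_def
  by (rule sum.mono_neutral_left) (use assms in \<open>auto simp: supp_def\<close>)

lemma nat_map_add:
  "finite (supp f) \<Longrightarrow> finite (supp g) \<Longrightarrow> nat_map h (f + g) = nat_map h f + nat_map h g"
proof -
  assume f: "finite (supp f)" and g: "finite (supp g)"
  let ?T = "supp f \<union> supp g"
  have "nat_map h (f + g) = (\<Sum>x\<in>?T. h x * (f + g) x)"
    using f g supp_add[of f g] by (intro nat_map_superset) auto
  also have "\<dots> = (\<Sum>x\<in>?T. h x * f x) + (\<Sum>x\<in>?T. h x * g x)"
    by (simp add: distrib_left sum.distrib)
  also have "\<dots> = nat_map h f + nat_map h g"
  proof -
    have "nat_map h f = (\<Sum>x\<in>?T. h x * f x)" by (rule nat_map_superset) (use f g in auto)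
    moreover have "nat_map h g = (\<Sum>x\<in>?T. h x * g x)" by (rule nat_map_superset) (use f g in auto)
    ultimately show ?thesis by simp
  qed
  finally show ?thesis .
qed

lemma nat_map_smul: "finite (supp f) \<Longrightarrow> nat_map h (smul c f) = c * nat_map h f"
proof -
  assume f: "finite (supp f)"
  have "nat_map h (smul c f) = (\<Sum>x\<in>supp f. h x * smul c f x)"
    using f supp_smul[of c f] by (intro nat_map_superset) auto
  also have "\<dots> = (\<Sum>x\<in>supp f. h x * (c * f x))" by (simp add: smul_apply)
  also have "\<dots> = c * nat_map h f" unfolding nat_map_def sum_distrib_left
    by (simp add: mult.left_commute)
  finally show ?thesis .
qed

lemma nat_map_zero[simp]: "nat_map h 0 = 0" by (simp add: nat_map_def)

lemma nat_map_uminus: "finite (supp f) \<Longrightarrow> nat_map h (- f) = - nat_map h f"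
  using nat_map_smul[of f h "-1"] by (metis mult_minus1 smul_one smul_uminus_left)

lemma nat_map_diff:
  "finite (supp f) \<Longrightarrow> finite (supp g) \<Longrightarrow> nat_map h (f - g) = nat_map h f - nat_map h g"
  using nat_map_add[of f "- g" h] nat_map_uminus[of g h] by simp

lemma nat_map_delta: "nat_map h (delta x b) = h x * b"
proof -
  have "nat_map h (delta x b) = (\<Sum>z\<in>{x}. h z * delta x b z)"
    using supp_delta[of x b] by (intro nat_map_superset) auto
  then show ?thesis by (simp add: delta_def)
qed

lemma nat_map_sum:
  "(\<And>i. i \<in> A \<Longrightarrow> finite (supp (f i)))
    \<Longrightarrow> nat_map h (\<Sum>i\<in>A. f i) = (\<Sum>i\<in>A. nat_map h (f i))"
  by (induction A rule: infinite_finite_induct) (auto simp: nat_map_add finite_supp_sum)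

section \<open>Submodules and spans\<close>

lemma bsubmod_zero: "is_bsubmod U \<Longrightarrow> 0 \<in> U"
  by (simp add: is_bsubmod_def zero_fun_def)
lemma bsubmod_add: "is_bsubmod U \<Longrightarrow> f \<in> U \<Longrightarrow> g \<in> U \<Longrightarrow> f + g \<in> U"
  unfolding is_bsubmod_def plus_fun_def by blast
lemma bsubmod_smul: "is_bsubmod U \<Longrightarrow> f \<in> U \<Longrightarrow> smul c f \<in> U"
  unfolding is_bsubmod_def smul_def by blast
lemma bsubmod_uminus: "is_bsubmod U \<Longrightarrow> f \<in> U \<Longrightarrow> - f \<in> U"
  using bsubmod_smul[of U f "-1"] by (metis smul_one smul_uminus_left)
lemma bsubmod_diff: "is_bsubmod U \<Longrightarrow> f \<in> U \<Longrightarrow> g \<in> U \<Longrightarrow> f - g \<in> U"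
  using bsubmod_add[of U f "- g"] bsubmod_uminus[of U g] by simp
lemma bsubmod_sum: "is_bsubmod U \<Longrightarrow> (\<And>i. i \<in> A \<Longrightarrow> f i \<in> U) \<Longrightarrow> (\<Sum>i\<in>A. f i) \<in> U"
  by (induction A rule: infinite_finite_induct) (auto intro: bsubmod_zero bsubmod_add)
lemma bsubmod_lin_comb: "is_bsubmod U \<Longrightarrow> S \<subseteq> U \<Longrightarrow> (\<Sum>s\<in>S. smul (c s) s) \<in> U"
  by (auto intro!: bsubmod_sum bsubmod_smul)

lemma lin_comb_indicator:
  "finite S \<Longrightarrow> v \<in> S \<Longrightarrow> (\<Sum>s\<in>S. smul (if s = v then 1 else 0) s) = v"
  by (simp add: if_distrib[of "\<lambda>c. smul c _"] sum.delta cong: if_cong)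

lemma is_bsubmodI:
  assumes "0 \<in> U" "\<And>f g. f \<in> U \<Longrightarrow> g \<in> U \<Longrightarrow> f + g \<in> U" "\<And>c f. f \<in> U \<Longrightarrow> smul c f \<in> U"
  shows "is_bsubmod U"
  using assms unfolding is_bsubmod_def zero_fun_def plus_fun_def smul_def by auto

lemma is_bsubmod_nat_map_preimage:
  assumes I: "is_ideal I"
  shows "is_bsubmod {g. finite (supp g) \<and> nat_map h g \<in> I}"
proof (rule is_bsubmodI)
  show "0 \<in> {g. finite (supp g) \<and> nat_map h g \<in> I}" by (simp add: ideal_zero[OF I])
  fix f g assume "f \<in> {g. finite (supp g) \<and> nat_map h g \<in> I}"
    and "g \<in> {g. finite (supp g) \<and> nat_map h g \<in> I}"
  then show "f + g \<in> {g. finite (supp g) \<and> nat_map h g \<in> I}"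
    by (simp add: nat_map_add finite_supp_add ideal_add[OF I])
next
  fix c f assume "f \<in> {g. finite (supp g) \<and> nat_map h g \<in> I}"
  then show "smul c f \<in> {g. finite (supp g) \<and> nat_map h g \<in> I}"
    by (simp add: nat_map_smul finite_supp_smul ideal_mult_left[OF I])
qed

lemma bspan_least: "is_bsubmod U \<Longrightarrow> G \<subseteq> U \<Longrightarrow> bspan G \<subseteq> U"
  unfolding bspan_def by (rule Inter_lower) simp
lemma bspan_superset: "G \<subseteq> bspan G"
  unfolding bspan_def by (rule Inter_greatest) simp
lemma in_bspan_UnI1: "x \<in> R \<Longrightarrow> x \<in> bspan (R \<union> S)"
  using bspan_superset[of "R \<union> S"] by blast
lemma in_bspan_UnI2: "x \<in> S \<Longrightarrow> x \<in> bspan (R \<union> S)"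
  using bspan_superset[of "R \<union> S"] by blast
lemma bspan_Un_superset2: "S \<subseteq> bspan (R \<union> S)"
  using bspan_superset[of "R \<union> S"] by blast
lemma bspan_Un_superset1: "R \<subseteq> bspan (R \<union> S)"
  using bspan_superset[of "R \<union> S"] by blast
lemma is_bsubmod_bspan: "is_bsubmod (bspan G)"
proof (rule is_bsubmodI)
  show "0 \<in> bspan G" unfolding bspan_def by (auto intro: bsubmod_zero)
  fix f g assume "f \<in> bspan G" "g \<in> bspan G"
  then show "f + g \<in> bspan G" unfolding bspan_def by (auto intro: bsubmod_add)
next
  fix c f assume "f \<in> bspan G"
  then show "smul c f \<in> bspan G" unfolding bspan_def by (auto intro: bsubmod_smul)
qed
lemma bspan_mono: "G \<subseteq> H \<Longrightarrow> bspan G \<subseteq> bspan H"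
  by (meson bspan_superset is_bsubmod_bspan bspan_least order_trans)
lemma bspan_eq_self: "is_bsubmod R \<Longrightarrow> bspan R = R"
  by (simp add: bspan_superset bspan_least subset_antisym)
lemma bspan_bspan_Un: "bspan (bspan G \<union> S) = bspan (G \<union> S)"
proof
  show "bspan (bspan G \<union> S) \<subseteq> bspan (G \<union> S)"
    by (intro bspan_least is_bsubmod_bspan Un_least)
      (auto intro: bspan_mono[THEN subsetD] bspan_superset[THEN subsetD])
  show "bspan (G \<union> S) \<subseteq> bspan (bspan G \<union> S)"
    by (intro bspan_mono) (use bspan_superset in blast)
qed

lemma is_bsubmod_lin_combs_mod:
  assumes R: "is_bsubmod R"
  shows "is_bsubmod {v. \<exists>r\<in>R. \<exists>c. v = r + (\<Sum>s\<in>S. smul (c s) s)}"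
proof (rule is_bsubmodI)
  let ?U = "{v. \<exists>r\<in>R. \<exists>c. v = r + (\<Sum>s\<in>S. smul (c s) s)}"
  show "0 \<in> ?U" using bsubmod_zero[OF R] by (auto intro!: bexI[of _ 0] exI[of _ "\<lambda>_. 0"])
  fix f g assume "f \<in> ?U" "g \<in> ?U"
  then obtain r1 c1 r2 c2 where "r1 \<in> R" "r2 \<in> R" "f = r1 + (\<Sum>s\<in>S. smul (c1 s) s)"
    "g = r2 + (\<Sum>s\<in>S. smul (c2 s) s)" by blast
  then have "f + g = (r1 + r2) + (\<Sum>s\<in>S. smul ((\<lambda>s. c1 s + c2 s) s) s)" "r1 + r2 \<in> R"
    by (simp_all add: smul_add_left sum.distrib bsubmod_add[OF R] algebra_simps)
  then show "f + g \<in> ?U"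
    by (intro CollectI bexI[where x="r1 + r2"] exI[where x="\<lambda>s. c1 s + c2 s"])
next
  let ?U = "{v. \<exists>r\<in>R. \<exists>c. v = r + (\<Sum>s\<in>S. smul (c s) s)}"
  fix c f assume "f \<in> ?U"
  then obtain r1 c1 where "r1 \<in> R" "f = r1 + (\<Sum>s\<in>S. smul (c1 s) s)" by blast
  then have "smul c f = smul c r1 + (\<Sum>s\<in>S. smul ((\<lambda>s. c * c1 s) s) s)" "smul c r1 \<in> R"
    by (simp_all add: smul_add_right smul_sum_right smul_smul bsubmod_smul[OF R])
  then show "smul c f \<in> ?U"
    by (intro CollectI bexI[where x="smul c r1"] exI[where x="\<lambda>s. c * c1 s"])
qed

lemma mem_bspan_Un_iff:
  assumes R: "is_bsubmod R" and S: "finite S"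
  shows "v \<in> bspan (R \<union> S) \<longleftrightarrow> (\<exists>r\<in>R. \<exists>c. v = r + (\<Sum>s\<in>S. smul (c s) s))"
proof
  let ?U = "{v. \<exists>r\<in>R. \<exists>c. v = r + (\<Sum>s\<in>S. smul (c s) s)}"
  have "R \<union> S \<subseteq> ?U"
  proof
    fix v assume "v \<in> R \<union> S"
    then show "v \<in> ?U"
    proof
      assume "v \<in> R"
      then show ?thesis by (intro CollectI bexI[where x=v] exI[where x="\<lambda>_. 0"]) simp_all
    next
      assume v: "v \<in> S"
      then have "v = 0 + (\<Sum>s\<in>S. smul (if s = v then 1 else 0) s)"
        using lin_comb_indicator[OF S v] by simp
      then show ?thesis using bsubmod_zero[OF R]
        by (intro CollectI bexI[where x=0] exI[where x="\<lambda>s. if s = v then 1 else 0"])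
    qed
  qed
  then have "bspan (R \<union> S) \<subseteq> ?U" by (rule bspan_least[OF is_bsubmod_lin_combs_mod[OF R]])
  then show "v \<in> bspan (R \<union> S) \<Longrightarrow> \<exists>r\<in>R. \<exists>c. v = r + (\<Sum>s\<in>S. smul (c s) s)" by blast
next
  assume "\<exists>r\<in>R. \<exists>c. v = r + (\<Sum>s\<in>S. smul (c s) s)"
  then obtain r c where "r \<in> R" "v = r + (\<Sum>s\<in>S. smul (c s) s)" by blast
  moreover have "r \<in> bspan (R \<union> S)" using \<open>r \<in> R\<close> by (rule in_bspan_UnI1)
  moreover have "(\<Sum>s\<in>S. smul (c s) s) \<in> bspan (R \<union> S)"
    by (rule bsubmod_lin_comb[OF is_bsubmod_bspan bspan_Un_superset2])
  ultimately show "v \<in> bspan (R \<union> S)" by (simp add: bsubmod_add[OF is_bsubmod_bspan])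
qed

lemma mem_bspan_Un_imp_lin_comb:
  assumes "is_bsubmod R" "finite S" "v \<in> bspan (R \<union> S)"
  shows "\<exists>c. v - (\<Sum>s\<in>S. smul (c s) s) \<in> R"
proof -
  obtain r c where "r \<in> R" "v = r + (\<Sum>s\<in>S. smul (c s) s)" using assms mem_bspan_Un_iff by blast
  then have "v - (\<Sum>s\<in>S. smul (c s) s) \<in> R" by simp
  then show ?thesis by blast
qed

section \<open>Minimal numbers of generators modulo a submodule\<close>

definition indep_mod :: "('a \<Rightarrow> 'b::comm_ring_1) set \<Rightarrow> ('a \<Rightarrow> 'b) set \<Rightarrow> bool" where
  "indep_mod R S \<longleftrightarrow> finite S \<and> (\<forall>c. (\<Sum>s\<in>S. smul (c s) s) \<in> R \<longrightarrow> (\<forall>s\<in>S. c s \<in> max_ideal))"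

definition max_ideal_annihilates :: "('a \<Rightarrow> 'b::comm_ring_1) set \<Rightarrow> ('a \<Rightarrow> 'b) set \<Rightarrow> bool" where
  "max_ideal_annihilates V R \<longleftrightarrow> is_bsubmod R \<and> (\<forall>c\<in>(max_ideal::'b set). \<forall>v\<in>V. smul c v \<in> R)"

text \<open>If the maximal ideal annihilates \<open>V\<close> modulo \<open>R\<close>, then \<open>min_gens V R\<close> is the dimension of
  \<open>V/R\<close> over the residue field.\<close>
definition min_gens :: "('a \<Rightarrow> 'b::comm_ring_1) set \<Rightarrow> ('a \<Rightarrow> 'b) set \<Rightarrow> nat" where
  "min_gens V R = (LEAST k. \<exists>S. finite S \<and> card S = k \<and> S \<subseteq> V \<and> V = bspan (R \<union> S))"

lemma min_gens_le: "finite S \<Longrightarrow> S \<subseteq> V \<Longrightarrow> V = bspan (R \<union> S) \<Longrightarrow> min_gens V R \<le> card S"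
  unfolding min_gens_def by (rule Least_le) blast

lemma min_gens_attained:
  assumes "finite S" "S \<subseteq> V" "V = bspan (R \<union> S)"
  obtains S' where "finite S'" "card S' = min_gens V R" "S' \<subseteq> V" "V = bspan (R \<union> S')"
proof -
  have "\<exists>k S. finite S \<and> card S = k \<and> S \<subseteq> V \<and> V = bspan (R \<union> S)" using assms by blast
  from LeastI_ex[OF this] show ?thesis using that unfolding min_gens_def by blast
qed

lemma indep_modD: "indep_mod R S \<Longrightarrow> (\<Sum>s\<in>S. smul (c s) s) \<in> R \<Longrightarrow> s \<in> S \<Longrightarrow> c s \<in> max_ideal"
  unfolding indep_mod_def by blast

lemma indep_mod_finite: "indep_mod R S \<Longrightarrow> finite S"
  unfolding indep_mod_def by blast

lemma indep_mod_empty: "indep_mod R {}"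
  by (simp add: indep_mod_def)

lemma max_ideal_annihilates_bsubmod: "max_ideal_annihilates V R \<Longrightarrow> is_bsubmod R"
  by (simp add: max_ideal_annihilates_def)

lemma max_ideal_annihilatesD:
  "max_ideal_annihilates V R \<Longrightarrow> c \<in> max_ideal \<Longrightarrow> v \<in> V \<Longrightarrow> smul c v \<in> R"
  by (simp add: max_ideal_annihilates_def)

lemma max_ideal_annihilates_subset:
  "max_ideal_annihilates V R \<Longrightarrow> V' \<subseteq> V \<Longrightarrow> max_ideal_annihilates V' R"
  unfolding max_ideal_annihilates_def by blast

lemma max_ideal_annihilates_mono:
  "max_ideal_annihilates V R \<Longrightarrow> is_bsubmod W \<Longrightarrow> R \<subseteq> W \<Longrightarrow> max_ideal_annihilates V W"
  unfolding max_ideal_annihilates_def by blast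

lemma lin_comb_restrict:
  assumes "finite S" "S' \<subseteq> S"
  shows "(\<Sum>s\<in>S'. smul (c s) s) = (\<Sum>s\<in>S. smul (if s \<in> S' then c s else 0) s)"
proof -
  have "(\<Sum>s\<in>S. smul (if s \<in> S' then c s else 0) s) = (\<Sum>s\<in>S. if s \<in> S' then smul (c s) s else 0)"
    by (rule sum.cong) auto
  also have "\<dots> = (\<Sum>s\<in>S \<inter> S'. smul (c s) s)" using assms(1) by (simp add: sum.inter_restrict)
  also have "S \<inter> S' = S'" using assms(2) by blast
  finally show ?thesis by simp
qed

lemma indep_mod_subset:
  assumes i: "indep_mod R S" and S': "S' \<subseteq> S"
  shows "indep_mod R S'"
  unfolding indep_mod_def
proof (intro conjI allI impI ballI)
  have fS: "finite S" using i indep_mod_finite by blast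
  then show "finite S'" using S' finite_subset by blast
  fix c s assume "(\<Sum>s\<in>S'. smul (c s) s) \<in> R" and s: "s \<in> S'"
  then have "(\<Sum>s\<in>S. smul (if s \<in> S' then c s else 0) s) \<in> R"
    using lin_comb_restrict[OF fS S'] by simp
  then have "(if s \<in> S' then c s else 0) \<in> max_ideal"
    using indep_modD[OF i, where c="\<lambda>s. if s \<in> S' then c s else 0"] s S' by blast
  then show "c s \<in> max_ideal" using s by simp
qed

lemma indep_mod_notin:
  assumes l: "local_ring TYPE('b::comm_ring_1)" and i: "indep_mod R (S::('a \<Rightarrow> 'b) set)"
    and v: "v \<in> S"
  shows "v \<notin> R"
proof
  assume "v \<in> R"
  then have "(\<Sum>s\<in>S. smul (if s = v then 1 else 0) s) \<in> R"
    using lin_comb_indicator[OF indep_mod_finite[OF i] v] by simp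
  then have "(if v = v then 1 else 0) \<in> (max_ideal::'b set)"
    using indep_modD[OF i, where c="\<lambda>s. if s = v then 1 else 0"] v by blast
  then show False using one_notin_max_ideal[OF l] by simp
qed

lemma indep_mod_image:
  assumes l: "local_ring TYPE('b::comm_ring_1)" and S: "finite S" and R: "is_bsubmod R"
    and coeff: "\<And>c s0. (\<Sum>s\<in>S. smul (c s) (f s)) \<in> R \<Longrightarrow> s0 \<in> S \<Longrightarrow> c s0 \<in> (max_ideal :: 'b set)"
  shows "inj_on f S" and "indep_mod R (f ` S :: ('a \<Rightarrow> 'b) set)"
proof -
  have indicator: "(\<Sum>s\<in>S. smul (if s = v then 1 else 0) (f s)) = f v" if "v \<in> S" for v
    using S that by (simp add: if_distrib[of "\<lambda>c. smul c _"] sum.delta cong: if_cong)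
  show inj: "inj_on f S"
  proof (rule inj_onI, rule ccontr)
    fix s1 s2 assume s1: "s1 \<in> S" and s2: "s2 \<in> S" and eq: "f s1 = f s2" and ne: "s1 \<noteq> s2"
    define c where "c s = (if s = s1 then 1 else 0) - (if s = s2 then (1::'b) else 0)" for s
    have "(\<Sum>s\<in>S. smul (c s) (f s))
        = (\<Sum>s\<in>S. smul (if s = s1 then 1 else 0) (f s))
          - (\<Sum>s\<in>S. smul (if s = s2 then 1 else 0) (f s))"
      unfolding c_def smul_diff_left by (rule sum_subtractf)
    also have "\<dots> = 0" using indicator[OF s1] indicator[OF s2] eq by simp
    finally have "c s1 \<in> max_ideal" using coeff[of c s1] s1 bsubmod_zero[OF R] by simp
    then show False using ne one_notin_max_ideal[OF l] by (simp add: c_def)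
  qed
  show "indep_mod R (f ` S)"
    unfolding indep_mod_def
  proof (intro conjI allI impI ballI)
    show "finite (f ` S)" using S by simp
    fix c t assume "(\<Sum>t\<in>f ` S. smul (c t) t) \<in> R" and t: "t \<in> f ` S"
    moreover have "(\<Sum>t\<in>f ` S. smul (c t) t) = (\<Sum>s\<in>S. smul (c (f s)) (f s))"
      by (rule sum.reindex[OF inj, unfolded comp_def])
    ultimately show "c t \<in> max_ideal" using coeff[of "\<lambda>s. c (f s)"] by auto
  qed
qed

lemma mem_bspan_insert_iff:
  assumes "is_bsubmod R"
  shows "v \<in> bspan (R \<union> {t}) \<longleftrightarrow> (\<exists>r\<in>R. \<exists>e. v = r + smul e t)"
  using mem_bspan_Un_iff[OF assms, of "{t}" v] by auto

lemma indep_mod_eliminate: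
  assumes l: "local_ring TYPE('b::comm_ring_1)" and R: "is_bsubmod R"
    and i: "indep_mod R (S::('a \<Rightarrow> 'b) set)" and s0: "s0 \<in> S"
    and e1: "(\<Sum>s\<in>S. smul (c s) s) = r1 + smul e1 t" and r1: "r1 \<in> R" and u: "u * e1 = 1"
    and e2: "(\<Sum>s\<in>S - {s0}. smul (d s) s) = r2 + smul e2 t" and r2: "r2 \<in> R"
  shows "e2 * (u * c s0) \<in> max_ideal"
proof -
  have fS: "finite S" using i indep_mod_finite by blast
  \<comment> \<open>Eliminating \<open>t\<close> between the two relations leaves a relation modulo \<open>R\<close> whose
    coefficient at \<open>s0\<close> is \<open>- e2 * u * c s0\<close>.\<close>
  define d' where "d' s = (if s \<in> S - {s0} then d s else 0) - e2 * u * c s" for s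
  have "(\<Sum>s\<in>S. smul (d' s) s)
      = (\<Sum>s\<in>S. smul (if s \<in> S - {s0} then d s else 0) s) - (\<Sum>s\<in>S. smul (e2 * u * c s) s)"
    unfolding d'_def by (simp add: smul_diff_left sum_subtractf)
  also have "(\<Sum>s\<in>S. smul (if s \<in> S - {s0} then d s else 0) s) = (\<Sum>s\<in>S - {s0}. smul (d s) s)"
    using lin_comb_restrict[OF fS, of "S - {s0}" d] by auto
  also have "(\<Sum>s\<in>S. smul (e2 * u * c s) s) = smul (e2 * u) (\<Sum>s\<in>S. smul (c s) s)"
    by (simp add: smul_sum_right smul_smul)
  finally have "(\<Sum>s\<in>S. smul (d' s) s) = (r2 + smul e2 t) - smul (e2 * u) (r1 + smul e1 t)"
    by (simp only: e1 e2)
  also have "\<dots> = r2 - smul (e2 * u) r1 + (smul e2 t - smul (e2 * (u * e1)) t)"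
    by (simp add: smul_add_right smul_smul mult.assoc)
  also have "\<dots> = r2 - smul (e2 * u) r1" using u by simp
  finally have "(\<Sum>s\<in>S. smul (d' s) s) \<in> R"
    using r1 r2 by (simp add: bsubmod_diff[OF R] bsubmod_smul[OF R])
  then have "d' s0 \<in> max_ideal" using indep_modD[OF i, where c=d'] s0 by blast
  then show "e2 * (u * c s0) \<in> max_ideal"
    unfolding d'_def using ideal_uminus[OF is_ideal_max_ideal[OF l]] by (fastforce simp: mult.assoc)
qed

lemma indep_mod_exchange:
  assumes l: "local_ring TYPE('b::comm_ring_1)" and a: "max_ideal_annihilates V R" and t: "t \<in> V"
    and i: "indep_mod R (S::('a \<Rightarrow> 'b) set)" and s0: "s0 \<in> S" and cs0: "c s0 \<notin> max_ideal"
    and c: "(\<Sum>s\<in>S. smul (c s) s) \<in> bspan (R \<union> {t})"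
  shows "indep_mod (bspan (R \<union> {t})) (S - {s0})"
  unfolding indep_mod_def
proof (intro conjI allI impI ballI)
  have R: "is_bsubmod R" using a max_ideal_annihilates_bsubmod by blast
  have fS: "finite S" using i indep_mod_finite by blast
  then show "finite (S - {s0})" by simp
  obtain r1 e1 where r1: "r1 \<in> R" and e1: "(\<Sum>s\<in>S. smul (c s) s) = r1 + smul e1 t"
    using c mem_bspan_insert_iff[OF R] by blast
  have "e1 \<notin> max_ideal"
  proof
    assume "e1 \<in> max_ideal"
    then have "(\<Sum>s\<in>S. smul (c s) s) \<in> R"
      using e1 r1 bsubmod_add[OF R] max_ideal_annihilatesD[OF a _ t] by simp
    then show False using indep_modD[OF i] s0 cs0 by blast
  qed
  then obtain u where u: "u * e1 = 1" using notin_max_ideal_imp_unit[OF l] by blast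
  have um: "u \<notin> max_ideal" using unit_notin_max_ideal[OF l, of e1 u] u by (simp add: mult.commute)
  fix d s assume d: "(\<Sum>s\<in>S - {s0}. smul (d s) s) \<in> bspan (R \<union> {t})" and s: "s \<in> S - {s0}"
  obtain r2 e2 where r2: "r2 \<in> R" and e2: "(\<Sum>s\<in>S - {s0}. smul (d s) s) = r2 + smul e2 t"
    using d mem_bspan_insert_iff[OF R] by blast
  have e2m: "e2 \<in> max_ideal"
  proof (rule ccontr)
    assume e2n: "e2 \<notin> max_ideal"
    have "e2 * (u * c s0) \<in> max_ideal" by (rule indep_mod_eliminate[OF l R i s0 e1 r1 u e2 r2])
    moreover have "e2 * (u * c s0) \<notin> max_ideal"
      using mult_notin_max_ideal[OF l e2n mult_notin_max_ideal[OF l um cs0]] .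
    ultimately show False by blast
  qed
  then have "(\<Sum>s\<in>S - {s0}. smul (d s) s) \<in> R"
    using e2 r2 bsubmod_add[OF R] max_ideal_annihilatesD[OF a _ t] by simp
  then show "d s \<in> max_ideal"
    using indep_modD[OF indep_mod_subset[OF i, of "S - {s0}"]] s by blast
qed

lemma card_indep_mod_le:
  assumes l: "local_ring TYPE('b::comm_ring_1)" and T: "finite T"
  shows "max_ideal_annihilates V R \<Longrightarrow> T \<subseteq> V \<Longrightarrow> indep_mod R S \<Longrightarrow> S \<subseteq> bspan (R \<union> T)
    \<Longrightarrow> card S \<le> card (T::('a \<Rightarrow> 'b) set)"
  using T
proof (induction T arbitrary: S R rule: finite_induct)
  case empty
  then have "S \<subseteq> R" using bspan_eq_self max_ideal_annihilates_bsubmod by fastforce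
  then have "S = {}" using empty indep_mod_notin[OF l] by blast
  then show ?case by simp
next
  case (insert t T)
  define R' where "R' = bspan (R \<union> {t})"
  have aR': "max_ideal_annihilates V R'"
    using insert.prems(1) unfolding R'_def
    by (rule max_ideal_annihilates_mono[OF _ is_bsubmod_bspan bspan_Un_superset1])
  have "bspan (R \<union> insert t T) = bspan (R' \<union> T)"
    unfolding R'_def bspan_bspan_Un by (simp add: insert_commute Un_assoc)
  then have SR': "S \<subseteq> bspan (R' \<union> T)" using insert.prems(4) by simp
  have TV: "T \<subseteq> V" and tV: "t \<in> V" using insert.prems(2) by auto
  show ?case
  proof (cases "indep_mod R' S")
    case True
    then show ?thesis using insert.IH[OF aR' TV True SR'] insert.hyps by simp
  next
    case False
    then obtain c s0 where "(\<Sum>s\<in>S. smul (c s) s) \<in> R'" "s0 \<in> S" "c s0 \<notin> max_ideal"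
      using indep_mod_finite[OF insert.prems(3)] unfolding indep_mod_def by blast
    with indep_mod_exchange[OF l insert.prems(1) tV insert.prems(3)]
    have "indep_mod R' (S - {s0})" and s0: "s0 \<in> S" unfolding R'_def by blast+
    then have "card (S - {s0}) \<le> card T" using insert.IH[OF aR' TV] SR' by blast
    then show ?thesis
      using insert.hyps s0 indep_mod_finite[OF insert.prems(3)] by (simp add: card_Diff_singleton)
  qed
qed

lemma min_gens_indep_mod:
  assumes l: "local_ring TYPE('b::comm_ring_1)" and R: "is_bsubmod R" and fS: "finite S"
    and SV: "S \<subseteq> V" and V: "V = bspan (R \<union> (S::('a \<Rightarrow> 'b) set))" and card: "card S = min_gens V R"
  shows "indep_mod R S"
  unfolding indep_mod_def
proof (intro conjI allI impI ballI fS)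
  fix c s0 assume cR: "(\<Sum>s\<in>S. smul (c s) s) \<in> R" and s0: "s0 \<in> S"
  show "c s0 \<in> max_ideal"
  proof (rule ccontr)
    assume "c s0 \<notin> max_ideal"
    then obtain u where u: "u * c s0 = 1" using notin_max_ideal_imp_unit[OF l] by blast
    let ?S' = "S - {s0}"
    have "smul u (\<Sum>s\<in>S. smul (c s) s) = smul u (smul (c s0) s0 + (\<Sum>s\<in>?S'. smul (c s) s))"
      unfolding sum.remove[OF fS s0] ..
    also have "\<dots> = smul (u * c s0) s0 + (\<Sum>s\<in>?S'. smul (u * c s) s)"
      unfolding smul_add_right smul_sum_right smul_smul ..
    finally have eq: "smul u (\<Sum>s\<in>S. smul (c s) s) - (\<Sum>s\<in>?S'. smul (u * c s) s) = s0"
      unfolding u by simp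
    have "smul u (\<Sum>s\<in>S. smul (c s) s) \<in> bspan (R \<union> ?S')"
      using bsubmod_smul[OF R cR] by (rule in_bspan_UnI1)
    moreover have "(\<Sum>s\<in>?S'. smul (u * c s) s) \<in> bspan (R \<union> ?S')"
      by (rule bsubmod_lin_comb[OF is_bsubmod_bspan bspan_Un_superset2])
    ultimately have "smul u (\<Sum>s\<in>S. smul (c s) s) - (\<Sum>s\<in>?S'. smul (u * c s) s) \<in> bspan (R \<union> ?S')"
      by (rule bsubmod_diff[OF is_bsubmod_bspan])
    then have "s0 \<in> bspan (R \<union> ?S')" by (simp only: eq)
    then have "R \<union> S \<subseteq> bspan (R \<union> ?S')" using bspan_superset[of "R \<union> ?S'"] by blast
    then have "bspan (R \<union> S) \<subseteq> bspan (R \<union> ?S')" by (rule bspan_least[OF is_bsubmod_bspan])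
    moreover have "bspan (R \<union> ?S') \<subseteq> bspan (R \<union> S)" by (rule bspan_mono) blast
    ultimately have "V = bspan (R \<union> ?S')" using V by blast
    then have "min_gens V R \<le> card ?S'" using fS SV by (intro min_gens_le) auto
    then show False using card card_Diff1_less[OF fS s0] by simp
  qed
qed

lemma min_gens_basis:
  assumes l: "local_ring TYPE('b::comm_ring_1)" and a: "max_ideal_annihilates V R"
    and i: "indep_mod R T"
    and TV: "T \<subseteq> V" and V: "V = bspan (R \<union> (T::('a \<Rightarrow> 'b) set))"
  shows "min_gens V R = card T"
proof (rule antisym)
  have fT: "finite T" using i indep_mod_finite by blast
  then show "min_gens V R \<le> card T" using TV V by (rule min_gens_le)
  obtain S where S: "finite S" "card S = min_gens V R" "S \<subseteq> V" "V = bspan (R \<union> S)"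
    using min_gens_attained[OF fT TV V] by blast
  have "card T \<le> card S" using card_indep_mod_le[OF l S(1) a S(3) i] TV S(4) by blast
  then show "card T \<le> min_gens V R" using S(2) by simp
qed

lemma indep_mod_insert:
  assumes l: "local_ring TYPE('b::comm_ring_1)" and a: "max_ideal_annihilates V R"
    and i: "indep_mod R (S::('a \<Rightarrow> 'b) set)" and v: "v \<in> V" and vS: "v \<notin> bspan (R \<union> S)"
  shows "indep_mod R (insert v S)"
  unfolding indep_mod_def
proof (intro conjI allI impI ballI)
  have R: "is_bsubmod R" using a max_ideal_annihilates_bsubmod by blast
  have fS: "finite S" using i indep_mod_finite by blast
  then show "finite (insert v S)" by simp
  have "v \<notin> S" using vS in_bspan_UnI2[of v S R] by blast
  then have split: "(\<Sum>s\<in>insert v S. smul (c s) s) = smul (c v) v + (\<Sum>s\<in>S. smul (c s) s)" for c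
    using fS by simp
  fix c s assume cR: "(\<Sum>s\<in>insert v S. smul (c s) s) \<in> R" and s: "s \<in> insert v S"
  have cv: "c v \<in> max_ideal"
  proof (rule ccontr)
    assume "c v \<notin> max_ideal"
    then obtain u where u: "u * c v = 1" using notin_max_ideal_imp_unit[OF l] by blast
    have eq: "smul u (\<Sum>s\<in>insert v S. smul (c s) s) - smul u (\<Sum>s\<in>S. smul (c s) s) = v"
      using u by (simp add: split smul_add_right smul_smul)
    have "smul u (\<Sum>s\<in>insert v S. smul (c s) s) \<in> bspan (R \<union> S)"
      using bsubmod_smul[OF R cR] by (rule in_bspan_UnI1)
    moreover have "smul u (\<Sum>s\<in>S. smul (c s) s) \<in> bspan (R \<union> S)"
      by (intro bsubmod_smul[OF is_bsubmod_bspan]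
          bsubmod_lin_comb[OF is_bsubmod_bspan bspan_Un_superset2])
    ultimately have "smul u (\<Sum>s\<in>insert v S. smul (c s) s) - smul u (\<Sum>s\<in>S. smul (c s) s)
        \<in> bspan (R \<union> S)"
      by (rule bsubmod_diff[OF is_bsubmod_bspan])
    then have "v \<in> bspan (R \<union> S)" by (simp only: eq)
    then show False using vS by blast
  qed
  have "(\<Sum>s\<in>S. smul (c s) s) \<in> R"
    using bsubmod_diff[OF R cR max_ideal_annihilatesD[OF a cv v]] unfolding split by simp
  then have "s \<in> S \<Longrightarrow> c s \<in> max_ideal" by (rule indep_modD[OF i])
  then show "c s \<in> max_ideal" using cv s by blast
qed

lemma indep_mod_extend:
  assumes l: "local_ring TYPE('b::comm_ring_1)" and a: "max_ideal_annihilates V R" and RW: "R \<subseteq> W"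
    and W: "is_bsubmod W" and WV: "W \<subseteq> V"
    and G: "finite G" "G \<subseteq> V" "W \<subseteq> bspan (R \<union> G)"
  shows "indep_mod R S \<Longrightarrow> S \<subseteq> W
    \<Longrightarrow> \<exists>B. S \<subseteq> B \<and> B \<subseteq> W \<and> indep_mod R B \<and> W = bspan (R \<union> (B::('a \<Rightarrow> 'b) set))"
proof (induction "card G - card S" arbitrary: S rule: less_induct)
  case less
  show ?case
  proof (cases "W \<subseteq> bspan (R \<union> S)")
    case True
    moreover have "bspan (R \<union> S) \<subseteq> W" using RW less.prems(2) by (intro bspan_least W) auto
    ultimately show ?thesis using less.prems by blast
  next
    case False
    then obtain v where vW: "v \<in> W" and vS: "v \<notin> bspan (R \<union> S)" by blast
    have ind: "indep_mod R (insert v S)"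
      using indep_mod_insert[OF l a less.prems(1) _ vS] vW WV by blast
    have "card (insert v S) \<le> card G"
      using card_indep_mod_le[OF l G(1) a G(2) ind] less.prems(2) vW G(3) by blast
    moreover have "v \<notin> S" using vS in_bspan_UnI2[of v S R] by blast
    ultimately have "card G - card (insert v S) < card G - card S"
      using indep_mod_finite[OF less.prems(1)] by simp
    moreover have "insert v S \<subseteq> W" using less.prems(2) vW by blast
    ultimately show ?thesis using less.hyps[OF _ ind] by blast
  qed
qed

lemma indep_mod_Diff:
  assumes R: "is_bsubmod R" and i: "indep_mod R B" and S: "S \<subseteq> B"
  shows "indep_mod (bspan (R \<union> S)) (B - S)"
  unfolding indep_mod_def
proof (intro conjI allI impI ballI)
  have fB: "finite B" using i indep_mod_finite by blast
  then have fS: "finite S" and fT: "finite (B - S)" using S finite_subset by auto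
  then show "finite (B - S)" by blast
  fix c t assume "(\<Sum>s\<in>B - S. smul (c s) s) \<in> bspan (R \<union> S)" and t: "t \<in> B - S"
  then obtain r d where r: "r \<in> R" and rd: "(\<Sum>s\<in>B - S. smul (c s) s) = r + (\<Sum>s\<in>S. smul (d s) s)"
    using mem_bspan_Un_iff[OF R fS] by blast
  define c' where "c' b = (if b \<in> B - S then c b else - d b)" for b
  have "(\<Sum>b\<in>B. smul (c' b) b) = (\<Sum>b\<in>B - S. smul (c' b) b) + (\<Sum>b\<in>S. smul (c' b) b)"
    by (rule sum.subset_diff[OF S fB])
  also have "(\<Sum>b\<in>B - S. smul (c' b) b) = (\<Sum>b\<in>B - S. smul (c b) b)"
    by (rule sum.cong) (auto simp: c'_def)
  also have "(\<Sum>b\<in>S. smul (c' b) b) = - (\<Sum>b\<in>S. smul (d b) b)"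
    by (simp add: c'_def smul_uminus_left sum_negf)
  finally have "(\<Sum>b\<in>B. smul (c' b) b) = r" using rd by simp
  then have "c' t \<in> max_ideal" using indep_modD[OF i, of c' t] r t by auto
  then show "c t \<in> max_ideal" using t c'_def by simp
qed

lemma min_gens_add:
  assumes l: "local_ring TYPE('b::comm_ring_1)" and a: "max_ideal_annihilates V R"
    and V: "is_bsubmod V"
    and W: "is_bsubmod W" and RW: "R \<subseteq> W" and WV: "W \<subseteq> V"
    and G: "finite G" "G \<subseteq> V" "V = bspan (R \<union> (G::('a \<Rightarrow> 'b) set))"
  shows "min_gens V R = min_gens W R + min_gens V W"
proof -
  have R: "is_bsubmod R" using a max_ideal_annihilates_bsubmod by blast
  obtain S where S: "S \<subseteq> W" "indep_mod R S" "W = bspan (R \<union> S)"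
    using indep_mod_extend[OF l a RW W WV G(1,2) _ indep_mod_empty] G(3) WV by blast
  obtain B where B: "S \<subseteq> B" "B \<subseteq> V" "indep_mod R B" "V = bspan (R \<union> B)"
    using indep_mod_extend[OF l a _ V order_refl G(1,2), of S] G(3) RW WV S by blast
  have fB: "finite B" using B(3) indep_mod_finite by blast
  have "min_gens W R = card S"
    using min_gens_basis[OF l max_ideal_annihilates_subset[OF a WV] S(2,1,3)] .
  moreover have "min_gens V R = card B"
    using min_gens_basis[OF l a B(3,2,4)] .
  moreover have "min_gens V W = card (B - S)"
  proof (rule min_gens_basis[OF l max_ideal_annihilates_mono[OF a W RW]])
    show "indep_mod W (B - S)" using indep_mod_Diff[OF R B(3,1)] S(3) by simp
    show "B - S \<subseteq> V" using B(2) by blast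
    have "R \<union> B \<subseteq> W \<union> (B - S)" using RW S(1) by blast
    then have "V \<subseteq> bspan (W \<union> (B - S))" using B(4) bspan_mono by blast
    moreover have "bspan (W \<union> (B - S)) \<subseteq> V" using WV B(2) by (intro bspan_least V) auto
    ultimately show "V = bspan (W \<union> (B - S))" by blast
  qed
  moreover have "card B = card (B - S) + card S"
    using card_Diff_subset[OF finite_subset[OF B(1) fB] B(1)] card_mono[OF fB B(1)] by simp
  ultimately show ?thesis by simp
qed

locale bmod_surjection =
  fixes T :: "('a \<Rightarrow> 'b::comm_ring_1) \<Rightarrow> ('c \<Rightarrow> 'b)" and V :: "('a \<Rightarrow> 'b) set" and V' :: "('c \<Rightarrow> 'b) set"
  assumes bsubmod: "is_bsubmod V"
    and add: "f \<in> V \<Longrightarrow> g \<in> V \<Longrightarrow> T (f + g) = T f + T g"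
    and smul: "f \<in> V \<Longrightarrow> T (smul c f) = smul c (T f)"
    and image: "T ` V = V'"
begin

lemma zero: "T 0 = 0"
  using add[of 0 0] bsubmod_zero[OF bsubmod] by simp

lemma diff: "f \<in> V \<Longrightarrow> g \<in> V \<Longrightarrow> T (f - g) = T f - T g"
  using add[of "f - g" g] bsubmod_diff[OF bsubmod] by (simp add: eq_diff_eq)

lemma lin_comb: "(\<And>s. s \<in> S \<Longrightarrow> f s \<in> V) \<Longrightarrow> T (\<Sum>s\<in>S. smul (c s) (f s)) = (\<Sum>s\<in>S. smul (c s) (T (f s)))"
proof (induction S rule: infinite_finite_induct)
  case (insert x F)
  have "T (\<Sum>s\<in>insert x F. smul (c s) (f s)) = T (smul (c x) (f x) + (\<Sum>s\<in>F. smul (c s) (f s)))"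
    using insert.hyps by simp
  also have "\<dots> = T (smul (c x) (f x)) + T (\<Sum>s\<in>F. smul (c s) (f s))"
    using insert.prems
      by (intro add) (auto intro!: bsubmod_smul[OF bsubmod] bsubmod_sum[OF bsubmod])
  also have "\<dots> = smul (c x) (T (f x)) + (\<Sum>s\<in>F. smul (c s) (T (f s)))"
    using smul[of "f x" "c x"] insert.IH insert.prems by simp
  also have "\<dots> = (\<Sum>s\<in>insert x F. smul (c s) (T (f s)))"
    by (rule sum.insert[OF insert.hyps, symmetric])
  finally show ?case .
qed (simp_all add: zero)

lemma is_bsubmod_image: "is_bsubmod V'"
proof (rule is_bsubmodI)
  show "0 \<in> V'" using image zero bsubmod_zero[OF bsubmod] by force
  fix f g assume "f \<in> V'" "g \<in> V'"
  then obtain f0 g0 where "f0 \<in> V" "g0 \<in> V" "f = T f0" "g = T g0" using image by blast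
  then show "f + g \<in> V'" using image add bsubmod_add[OF bsubmod] by (metis imageI)
next
  fix c f assume "f \<in> V'"
  then obtain f0 where "f0 \<in> V" "f = T f0" using image by blast
  then show "smul c f \<in> V'" using image smul bsubmod_smul[OF bsubmod] by (metis imageI)
qed

lemma is_bsubmod_preimage:
  assumes R': "is_bsubmod R'"
  shows "is_bsubmod {v \<in> V. T v \<in> R'}"
proof (rule is_bsubmodI)
  show "0 \<in> {v \<in> V. T v \<in> R'}" using zero bsubmod_zero[OF bsubmod] bsubmod_zero[OF R'] by simp
  fix f g assume "f \<in> {v \<in> V. T v \<in> R'}" "g \<in> {v \<in> V. T v \<in> R'}"
  then show "f + g \<in> {v \<in> V. T v \<in> R'}" using add bsubmod_add[OF bsubmod] bsubmod_add[OF R'] by simp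
next
  fix c f assume "f \<in> {v \<in> V. T v \<in> R'}"
  then show "smul c f \<in> {v \<in> V. T v \<in> R'}" using smul bsubmod_smul[OF bsubmod] bsubmod_smul[OF R']
    by simp
qed

lemma bspan_preimage_lift:
  assumes R': "is_bsubmod R'" and S': "finite S'" "S' \<subseteq> V'" "V' = bspan (R' \<union> S')"
  obtains S where "finite S" "card S = card S'" "S \<subseteq> V" "V = bspan ({v \<in> V. T v \<in> R'} \<union> S)"
proof -
  let ?W = "{v \<in> V. T v \<in> R'}"
  have "\<forall>y\<in>V'. \<exists>x. x \<in> V \<and> T x = y" using image by blast
  then obtain lift where lift: "\<forall>y\<in>V'. lift y \<in> V \<and> T (lift y) = y" by (metis bchoice)
  have "inj_on lift S'"
  proof (rule inj_onI)
    fix x y assume "x \<in> S'" "y \<in> S'" "lift x = lift y"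
    then show "x = y" using lift S'(2) by (metis subsetD)
  qed
  then have card: "card (lift ` S') = card S'" by (rule card_image)
  have SV: "lift ` S' \<subseteq> V" using lift S'(2) by blast
  have "V \<subseteq> bspan (?W \<union> lift ` S')"
  proof
    fix v assume v: "v \<in> V"
    then have "T v \<in> V'" using image by blast
    then obtain r c where r: "r \<in> R'" and Tv: "T v = r + (\<Sum>s\<in>S'. smul (c s) s)"
      using S'(3) mem_bspan_Un_iff[OF R' S'(1)] by blast
    define u where "u = (\<Sum>s\<in>S'. smul (c s) (lift s))"
    have uV: "u \<in> V" unfolding u_def using SV
      by (intro bsubmod_sum[OF bsubmod] bsubmod_smul[OF bsubmod]) blast
    have "T u = (\<Sum>s\<in>S'. smul (c s) (T (lift s)))"
      unfolding u_def by (rule lin_comb) (use SV in blast)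
    also have "\<dots> = (\<Sum>s\<in>S'. smul (c s) s)"
      using lift S'(2) by (intro sum.cong) auto
    finally have "T (v - u) = r" using diff[OF v uV] Tv by simp
    then have "v - u \<in> bspan (?W \<union> lift ` S')"
      using bsubmod_diff[OF bsubmod v uV] r by (intro in_bspan_UnI1) simp
    moreover have "u \<in> bspan (?W \<union> lift ` S')"
      unfolding u_def
        by (intro bsubmod_sum[OF is_bsubmod_bspan] bsubmod_smul[OF is_bsubmod_bspan] in_bspan_UnI2)
          blast
    ultimately have "(v - u) + u \<in> bspan (?W \<union> lift ` S')"
      by (rule bsubmod_add[OF is_bsubmod_bspan])
    then show "v \<in> bspan (?W \<union> lift ` S')" by simp
  qed
  moreover have "bspan (?W \<union> lift ` S') \<subseteq> V" using SV by (intro bspan_least bsubmod) blast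
  ultimately show ?thesis using that[of "lift ` S'"] S'(1) card SV by blast
qed

lemma bspan_image:
  assumes R': "is_bsubmod R'" "R' \<subseteq> V'"
    and S: "finite S" "S \<subseteq> V" "V = bspan ({v \<in> V. T v \<in> R'} \<union> S)"
  shows "V' = bspan (R' \<union> T ` S)"
proof
  let ?W = "{v \<in> V. T v \<in> R'}"
  show "bspan (R' \<union> T ` S) \<subseteq> V'"
    using R'(2) image S(2) by (intro bspan_least is_bsubmod_image) auto
  show "V' \<subseteq> bspan (R' \<union> T ` S)"
  proof
    fix y assume "y \<in> V'"
    then obtain v where v: "v \<in> V" "y = T v" using image by blast
    then obtain w c where w: "w \<in> ?W" and vw: "v = w + (\<Sum>s\<in>S. smul (c s) s)"
      using S(3) mem_bspan_Un_iff[OF is_bsubmod_preimage[OF R'(1)] S(1)] by blast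
    have "(\<Sum>s\<in>S. smul (c s) s) \<in> V" using S(2) by (rule bsubmod_lin_comb[OF bsubmod])
    then have "T v = T w + (\<Sum>s\<in>S. smul (c s) (T s))"
      using vw w add lin_comb[of S "\<lambda>s. s" c] S(2) by auto
    moreover have "T w \<in> bspan (R' \<union> T ` S)" using w by (intro in_bspan_UnI1) blast
    moreover have "(\<Sum>s\<in>S. smul (c s) (T s)) \<in> bspan (R' \<union> T ` S)"
      by (intro bsubmod_sum[OF is_bsubmod_bspan] bsubmod_smul[OF is_bsubmod_bspan] in_bspan_UnI2)
        blast
    ultimately show "y \<in> bspan (R' \<union> T ` S)" using v(2) bsubmod_add[OF is_bsubmod_bspan] by simp
  qed
qed

lemma min_gens_preimage:
  assumes R': "is_bsubmod R'" "R' \<subseteq> V'" and G': "finite G'" "G' \<subseteq> V'" "V' = bspan (R' \<union> G')"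
  shows "min_gens V {v \<in> V. T v \<in> R'} = min_gens V' R'"
proof (rule antisym)
  let ?W = "{v \<in> V. T v \<in> R'}"
  obtain S' where S': "finite S'" "card S' = min_gens V' R'" "S' \<subseteq> V'" "V' = bspan (R' \<union> S')"
    using min_gens_attained[OF G'] by blast
  obtain S where S: "finite S" "card S = card S'" "S \<subseteq> V" "V = bspan (?W \<union> S)"
    using bspan_preimage_lift[OF R'(1) S'(1,3,4)] by blast
  show "min_gens V ?W \<le> min_gens V' R'" using min_gens_le[OF S(1,3,4)] S(2) S'(2) by simp
  obtain S0 where S0: "finite S0" "card S0 = min_gens V ?W" "S0 \<subseteq> V" "V = bspan (?W \<union> S0)"
    using min_gens_attained[OF S(1,3,4)] by blast
  have "min_gens V' R' \<le> card (T ` S0)"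
    using min_gens_le[OF _ _ bspan_image[OF R' S0(1,3,4)]] S0 image by auto
  also have "\<dots> \<le> card S0" using S0(1) card_image_le by blast
  finally show "min_gens V' R' \<le> min_gens V ?W" using S0(2) by simp
qed

end

lemma lin_comb_mod_expansion:
  assumes R: "is_bsubmod R" and fin: "finite (supp f)"
    and k: "\<And>x. x \<in> supp f \<Longrightarrow> delta x 1 - (\<Sum>b\<in>B. smul (k x b) b) \<in> R"
  shows "f - (\<Sum>b\<in>B. smul (\<Sum>x\<in>supp f. f x * k x b) b) \<in> R"
proof -
  have "(\<Sum>x\<in>supp f. smul (f x) (delta x 1 - (\<Sum>b\<in>B. smul (k x b) b)))
      = (\<Sum>x\<in>supp f. delta x (f x) - (\<Sum>b\<in>B. smul (f x * k x b) b))"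
    by (rule sum.cong) (simp_all add: smul_diff_right smul_delta smul_sum_right smul_smul)
  also have "\<dots> = (\<Sum>x\<in>supp f. delta x (f x)) - (\<Sum>x\<in>supp f. \<Sum>b\<in>B. smul (f x * k x b) b)"
    by (rule sum_subtractf)
  also have "(\<Sum>x\<in>supp f. \<Sum>b\<in>B. smul (f x * k x b) b) = (\<Sum>b\<in>B. smul (\<Sum>x\<in>supp f. f x * k x b) b)"
    unfolding smul_sum_left by (rule sum.swap)
  also have "(\<Sum>x\<in>supp f. delta x (f x)) = f" using supp_decomposition[OF fin] by simp
  finally have eq: "(\<Sum>x\<in>supp f. smul (f x) (delta x 1 - (\<Sum>b\<in>B. smul (k x b) b)))
      = f - (\<Sum>b\<in>B. smul (\<Sum>x\<in>supp f. f x * k x b) b)" .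
  have "(\<Sum>x\<in>supp f. smul (f x) (delta x 1 - (\<Sum>b\<in>B. smul (k x b) b))) \<in> R"
    by (intro bsubmod_sum[OF R] bsubmod_smul[OF R] k)
  then show ?thesis by (simp only: eq)
qed

lemma coordinate_functional:
  fixes R B F :: "('a::comm_ring_1 \<Rightarrow> 'b::comm_ring_1) set" and M :: "'a set"
  assumes l: "local_ring TYPE('b)" and R: "is_bsubmod R" and i: "indep_mod R B"
    and F: "F = bspan (R \<union> B)" and supp: "\<And>f. f \<in> F \<Longrightarrow> finite (supp f) \<and> supp f \<subseteq> M"
    and delta: "\<And>x. x \<in> M \<Longrightarrow> delta x 1 \<in> F" and s0: "s0 \<in> B"
  obtains coord where "\<And>g. g \<in> R \<Longrightarrow> nat_map coord g \<in> max_ideal"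
    and "\<And>s. s \<in> B \<Longrightarrow> nat_map coord s - (if s = s0 then 1 else 0) \<in> max_ideal"
proof -
  have fB: "finite B" using i indep_mod_finite by blast
  have "\<forall>x\<in>M. \<exists>k. delta x 1 - (\<Sum>b\<in>B. smul (k b) b) \<in> R"
    using delta F mem_bspan_Un_imp_lin_comb[OF R fB] by blast
  then obtain k where k: "\<And>x. x \<in> M \<Longrightarrow> delta x 1 - (\<Sum>b\<in>B. smul (k x b) b) \<in> R"
    by (metis bchoice)
  \<comment> \<open>The coordinate at \<open>s0\<close> of the basis vectors \<open>delta x 1\<close> extends by linearity to all of \<open>F\<close>.\<close>
  define coord where "coord x = k x s0" for x
  have coord: "nat_map coord f - c s0 \<in> max_ideal"
    if f: "f \<in> F" and c: "f - (\<Sum>b\<in>B. smul (c b) b) \<in> R" for f c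
  proof -
    have fin: "finite (supp f)" and sM: "supp f \<subseteq> M" using supp[OF f] by auto
    define e where "e b = (\<Sum>x\<in>supp f. f x * k x b)" for b
    have "f - (\<Sum>b\<in>B. smul (e b) b) \<in> R"
      unfolding e_def using sM by (intro lin_comb_mod_expansion[OF R fin] k) blast
    then have "(f - (\<Sum>b\<in>B. smul (e b) b)) - (f - (\<Sum>b\<in>B. smul (c b) b)) \<in> R"
      using c by (rule bsubmod_diff[OF R])
    moreover have "(f - (\<Sum>b\<in>B. smul (e b) b)) - (f - (\<Sum>b\<in>B. smul (c b) b))
        = (\<Sum>b\<in>B. smul (c b - e b) b)"
      by (simp add: smul_diff_left sum_subtractf)
    ultimately have "c s0 - e s0 \<in> max_ideal" using indep_modD[OF i, of "\<lambda>b. c b - e b" s0] s0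
      by simp
    then have "- (c s0 - e s0) \<in> max_ideal" by (rule ideal_uminus[OF is_ideal_max_ideal[OF l]])
    moreover have "nat_map coord f = e s0" unfolding nat_map_def coord_def e_def
      by (simp add: mult.commute)
    ultimately show ?thesis by simp
  qed
  show ?thesis
  proof (rule that)
    fix g assume g: "g \<in> R"
    then have "g \<in> F" unfolding F by (rule in_bspan_UnI1)
    from coord[OF this, of "\<lambda>_. 0"] g show "nat_map coord g \<in> max_ideal" by simp
  next
    fix s assume s: "s \<in> B"
    then have "s \<in> F" unfolding F by (rule in_bspan_UnI2)
    moreover have "s - (\<Sum>b\<in>B. smul (if b = s then 1 else 0) b) \<in> R"
      using lin_comb_indicator[OF fB s] bsubmod_zero[OF R] by simp
    ultimately show "nat_map coord s - (if s = s0 then 1 else 0) \<in> max_ideal"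
      using coord[of s "\<lambda>b. if b = s then 1 else 0"] by (simp add: eq_commute)
  qed
qed

section \<open>Formal sums and their relations\<close>

lemma is_bsubmod_formal_sums: "is_bsubmod (formal_sums :: ('a::comm_ring_1 \<Rightarrow> 'b::comm_ring_1) set)"
proof (rule is_bsubmodI)
  show "0 \<in> (formal_sums :: ('a \<Rightarrow> 'b) set)" by (simp add: formal_sums_def)
  fix f g :: "'a \<Rightarrow> 'b" assume "f \<in> formal_sums" "g \<in> formal_sums"
  then show "f + g \<in> formal_sums" unfolding formal_sums_def
    using supp_add[of f g] finite_supp_add[of f g] by blast
next
  fix c and f :: "'a \<Rightarrow> 'b" assume "f \<in> formal_sums"
  then show "smul c f \<in> formal_sums" unfolding formal_sums_def
    using supp_smul[of c f] finite_supp_smul[of f c] by blast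
qed

lemma formal_sums_finite_supp: "f \<in> formal_sums \<Longrightarrow> finite (supp f)" by (simp add: formal_sums_def)
lemma formal_sums_supp: "f \<in> formal_sums \<Longrightarrow> supp f \<subseteq> max_ideal" by (simp add: formal_sums_def)

lemma delta_in_formal_sums:
  "x \<in> max_ideal \<Longrightarrow> delta x (b::'b::comm_ring_1) \<in> (formal_sums :: ('a::comm_ring_1 \<Rightarrow> 'b) set)"
  unfolding formal_sums_def using supp_delta[of x b] finite_supp_delta[of x b] by blast

lemma additivity_rel:
  "x \<in> max_ideal \<Longrightarrow> y \<in> max_ideal \<Longrightarrow> delta (x + y) b - delta x b - delta y b \<in> tensor_rels f"
  unfolding tensor_rels_def fun_diff_def by blast
lemma balancing_rel: "x \<in> max_ideal \<Longrightarrow> delta (a * x) b - delta x (f a * b) \<in> tensor_rels f"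
  unfolding tensor_rels_def fun_diff_def by blast
lemma residue_rel: "x \<in> max_ideal \<Longrightarrow> b \<in> max_ideal \<Longrightarrow> delta x b \<in> tensor_rels f"
  unfolding tensor_rels_def by blast

lemma tensor_rels_cases:
  assumes "g \<in> tensor_rels f"
  obtains x y b where "x \<in> max_ideal" "y \<in> max_ideal" "g = delta (x + y) b - delta x b - delta y b"
    | a x b where "x \<in> max_ideal" "g = delta (a * x) b - delta x (f a * b)"
    | x b where "x \<in> max_ideal" "b \<in> max_ideal" "g = delta x b"
  using assms unfolding tensor_rels_def fun_diff_def by blast

lemma tensor_rels_formal_sums:
  assumes l: "local_ring TYPE('a::comm_ring_1)"
  shows "tensor_rels (f :: 'a \<Rightarrow> 'b::comm_ring_1) \<subseteq> formal_sums"
proof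
  fix g assume "g \<in> tensor_rels f"
  then show "g \<in> formal_sums"
  proof (cases rule: tensor_rels_cases)
    case (1 x y b)
    have "x + y \<in> max_ideal" using 1 ideal_add[OF is_ideal_max_ideal[OF l]] by blast
    then show ?thesis using 1 delta_in_formal_sums
      by (auto intro!: bsubmod_diff[OF is_bsubmod_formal_sums])
  next
    case (2 a x b)
    have "a * x \<in> max_ideal" using 2 ideal_mult_left[OF is_ideal_max_ideal[OF l]] by blast
    then show ?thesis using 2 delta_in_formal_sums
      by (auto intro!: bsubmod_diff[OF is_bsubmod_formal_sums])
  next
    case (3 x b)
    then show ?thesis using delta_in_formal_sums by auto
  qed
qed

lemma bspan_tensor_rels_formal_sums:
  "local_ring TYPE('a::comm_ring_1) \<Longrightarrow> bspan (tensor_rels (f :: 'a \<Rightarrow> 'b::comm_ring_1)) \<subseteq> formal_sums"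
  by (intro bspan_least is_bsubmod_formal_sums tensor_rels_formal_sums)

lemma is_bsubmod_ker_reps: "is_bsubmod (ker_reps (f :: 'a::comm_ring_1 \<Rightarrow> 'b::comm_ring_1))"
proof (rule is_bsubmodI)
  have "(0::'b) \<in> ideal_prod max_ideal max_ideal" by (rule ideal_zero[OF is_ideal_ideal_prod])
  then show "0 \<in> ker_reps f" unfolding ker_reps_def using bsubmod_zero[OF is_bsubmod_formal_sums]
    by simp
  fix g h assume g: "g \<in> ker_reps f" and h: "h \<in> ker_reps f"
  then have gf: "g \<in> formal_sums" and hf: "h \<in> formal_sums"
    and gi: "nat_map f g \<in> ideal_prod max_ideal max_ideal"
    and hi: "nat_map f h \<in> ideal_prod max_ideal max_ideal"
    by (auto simp: ker_reps_def)
  have "nat_map f (g + h) = nat_map f g + nat_map f h"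
    using nat_map_add[OF formal_sums_finite_supp[OF gf] formal_sums_finite_supp[OF hf]] .
  also have "\<dots> \<in> ideal_prod max_ideal max_ideal" using ideal_add[OF is_ideal_ideal_prod gi hi] .
  finally show "g + h \<in> ker_reps f" unfolding ker_reps_def
    using bsubmod_add[OF is_bsubmod_formal_sums gf hf] by simp
next
  fix c g assume g: "g \<in> ker_reps f"
  then have gf: "g \<in> formal_sums" and gi: "nat_map f g \<in> ideal_prod max_ideal max_ideal"
    by (auto simp: ker_reps_def)
  have "nat_map f (smul c g) = c * nat_map f g"
    using nat_map_smul[OF formal_sums_finite_supp[OF gf]] .
  also have "\<dots> \<in> ideal_prod max_ideal max_ideal" using ideal_mult_left[OF is_ideal_ideal_prod gi] .
  finally show "smul c g \<in> ker_reps f" unfolding ker_reps_def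
    using bsubmod_smul[OF is_bsubmod_formal_sums gf] by simp
qed

lemma ker_reps_formal_sums: "ker_reps f \<subseteq> formal_sums" by (auto simp: ker_reps_def)

lemma ker_reps_finite_supp: "f \<in> ker_reps h \<Longrightarrow> finite (supp f)"
  using ker_reps_formal_sums formal_sums_finite_supp by blast

lemma tensor_rels_ker_reps:
  assumes l: "local_ring TYPE('a::comm_ring_1)" and h: "local_hom (f :: 'a \<Rightarrow> 'b::comm_ring_1)"
  shows "tensor_rels f \<subseteq> ker_reps f"
proof
  fix g assume g: "g \<in> tensor_rels f"
  have gfs: "g \<in> formal_sums" using tensor_rels_formal_sums[OF l] g by blast
  have rh: "ring_hom f" using h local_hom_ring_hom by blast
  have "nat_map f g \<in> ideal_prod max_ideal max_ideal"
    using g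
  proof (cases rule: tensor_rels_cases)
    case (1 x y b)
    have "nat_map f g = f (x + y) * b - f x * b - f y * b"
      unfolding 1 by (simp add: nat_map_diff finite_supp_diff finite_supp_delta nat_map_delta)
    also have "\<dots> = 0" by (simp add: ring_hom_add[OF rh] algebra_simps)
    finally show ?thesis using ideal_zero[OF is_ideal_ideal_prod] by simp
  next
    case (2 a x b)
    have "nat_map f g = f (a * x) * b - f x * (f a * b)"
      unfolding 2 by (simp add: nat_map_diff finite_supp_diff finite_supp_delta nat_map_delta)
    also have "\<dots> = 0" by (simp add: ring_hom_mult[OF rh] algebra_simps)
    finally show ?thesis using ideal_zero[OF is_ideal_ideal_prod] by simp
  next
    case (3 x b)
    have "nat_map f g = f x * b" unfolding 3 by (rule nat_map_delta)
    then show ?thesis using mult_in_ideal_prod[OF local_hom_max_ideal[OF h 3(1)] 3(2)] by simp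
  qed
  then show "g \<in> ker_reps f" using gfs by (simp add: ker_reps_def)
qed

lemma bspan_tensor_rels_ker_reps:
  "local_ring TYPE('a::comm_ring_1) \<Longrightarrow> local_hom (f :: 'a \<Rightarrow> 'b::comm_ring_1)
    \<Longrightarrow> bspan (tensor_rels f) \<subseteq> ker_reps f"
  by (intro bspan_least is_bsubmod_ker_reps tensor_rels_ker_reps)

lemma max_ideal_annihilates_formal_sums:
  assumes la: "local_ring TYPE('a::comm_ring_1)" and lb: "local_ring TYPE('b::comm_ring_1)"
  shows "max_ideal_annihilates (formal_sums :: ('a \<Rightarrow> 'b) set) (bspan (tensor_rels f))"
  unfolding max_ideal_annihilates_def
proof (intro conjI ballI is_bsubmod_bspan)
  fix c :: 'b and v :: "'a \<Rightarrow> 'b" assume c: "c \<in> max_ideal" and v: "v \<in> formal_sums"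
  have "smul c v = (\<Sum>x\<in>supp v. delta x (c * v x))"
    using supp_decomposition[OF formal_sums_finite_supp[OF v]]
      by (metis (no_types, lifting) smul_delta smul_sum_right sum.cong smul_apply)
  also have "\<dots> \<in> bspan (tensor_rels f)"
  proof (rule bsubmod_sum[OF is_bsubmod_bspan])
    fix x assume "x \<in> supp v"
    then have "x \<in> max_ideal" using formal_sums_supp[OF v] by blast
    moreover have "c * v x \<in> max_ideal" using ideal_mult_right[OF is_ideal_max_ideal[OF lb] c] .
    ultimately show "delta x (c * v x) \<in> bspan (tensor_rels f)"
      using residue_rel bspan_superset by blast
  qed
  finally show "smul c v \<in> bspan (tensor_rels f)" .
qed

lemma rd_eq_min_gens: "rd f = min_gens (ker_reps f) (bspan (tensor_rels f))"
  by (simp add: rd_def min_gens_def bspan_bspan_Un)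

lemma max_ideal_annihilates_ker_reps:
  "local_ring TYPE('a::comm_ring_1) \<Longrightarrow> local_ring TYPE('b::comm_ring_1)
    \<Longrightarrow> max_ideal_annihilates (ker_reps (f :: 'a \<Rightarrow> 'b)) (bspan (tensor_rels f))"
  using max_ideal_annihilates_subset[OF max_ideal_annihilates_formal_sums ker_reps_formal_sums] .

lemma is_ideal_delta_support:
  assumes l: "local_ring TYPE('a::comm_ring_1)" and U: "is_bsubmod U"
    and rels: "tensor_rels (f :: 'a \<Rightarrow> 'b::comm_ring_1) \<subseteq> U"
  shows "is_ideal {x \<in> (max_ideal :: 'a set). \<forall>b. delta x b \<in> U}"
  unfolding is_ideal_def
proof (intro conjI ballI allI)
  have m: "is_ideal (max_ideal :: 'a set)" using is_ideal_max_ideal[OF l] .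
  have "delta (0 + 0) b - delta 0 b - delta (0::'a) b \<in> U" for b
    using rels additivity_rel ideal_zero[OF m] by blast
  then have "- (delta (0 + 0) b - delta 0 b - delta (0::'a) b) \<in> U" for b
    by (rule bsubmod_uminus[OF U])
  then show "0 \<in> {x \<in> max_ideal. \<forall>b. delta x b \<in> U}" using ideal_zero[OF m] by simp
next
  fix x y assume x: "x \<in> {x \<in> max_ideal. \<forall>b. delta x b \<in> U}"
    and y: "y \<in> {x \<in> max_ideal. \<forall>b. delta x b \<in> U}"
  have "delta (x + y) b \<in> U" for b
  proof -
    have "delta (x + y) b - delta x b - delta y b \<in> U" using rels additivity_rel x y by blast
    then have "(delta (x + y) b - delta x b - delta y b) + delta x b + delta y b \<in> U"
      using x y bsubmod_add[OF U] by blast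
    then show ?thesis by simp
  qed
  then show "x + y \<in> {x \<in> max_ideal. \<forall>b. delta x b \<in> U}"
    using x y ideal_add[OF is_ideal_max_ideal[OF l]] by blast
next
  fix r x assume x: "x \<in> {x \<in> max_ideal. \<forall>b. delta x b \<in> U}"
  have "delta (r * x) b \<in> U" for b
  proof -
    have "delta (r * x) b - delta x (f r * b) \<in> U" using rels balancing_rel x by blast
    then have "(delta (r * x) b - delta x (f r * b)) + delta x (f r * b) \<in> U"
      using x bsubmod_add[OF U] by blast
    then show ?thesis by simp
  qed
  then show "r * x \<in> {x \<in> max_ideal. \<forall>b. delta x b \<in> U}"
    using x ideal_mult_left[OF is_ideal_max_ideal[OF l]] by blast
qed

lemma delta_in_bsubmod_of_generators:
  assumes l: "local_ring TYPE('a::comm_ring_1)" and U: "is_bsubmod U" and rels: "tensor_rels f \<subseteq> U"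
    and Gen: "(max_ideal :: 'a set) = ideal_gen Gen"
      "\<And>g. g \<in> Gen \<Longrightarrow> delta g (1::'b::comm_ring_1) \<in> U"
    and x: "x \<in> max_ideal"
  shows "delta x b \<in> U"
proof -
  have "Gen \<subseteq> {x \<in> max_ideal. \<forall>b. delta x b \<in> U}"
  proof
    fix g assume g: "g \<in> Gen"
    have "smul b (delta g 1) \<in> U" for b using bsubmod_smul[OF U Gen(2)[OF g]] .
    then have "delta g b \<in> U" for b by (simp add: smul_delta)
    then show "g \<in> {x \<in> max_ideal. \<forall>b. delta x b \<in> U}" using g Gen(1) ideal_gen_superset by blast
  qed
  then have "ideal_gen Gen \<subseteq> {x \<in> max_ideal. \<forall>b. delta x b \<in> U}"
    by (rule ideal_gen_least[OF is_ideal_delta_support[OF l U rels]])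
  then show ?thesis using x Gen(1) by blast
qed

lemma formal_sums_finitely_generated:
  assumes n: "noetherian_local_ring TYPE('a::comm_ring_1)"
  obtains G where "finite G" "G \<subseteq> (formal_sums :: ('a \<Rightarrow> 'b::comm_ring_1) set)"
    "formal_sums = bspan (bspan (tensor_rels f) \<union> G)"
proof -
  have l: "local_ring TYPE('a)" using n by (simp add: noetherian_local_ring_def)
  obtain Gen where Gen: "finite Gen" "(max_ideal :: 'a set) = ideal_gen Gen"
    using n is_ideal_max_ideal[OF l] unfolding noetherian_local_ring_def noetherian_ring_def
      by blast
  define G where "G = (\<lambda>g. delta g (1::'b)) ` Gen"
  define U where "U = bspan (bspan (tensor_rels f) \<union> G)"
  have GF: "G \<subseteq> formal_sums" unfolding G_def using Gen(2) ideal_gen_superset delta_in_formal_sums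
    by blast
  have U: "is_bsubmod U" unfolding U_def by (rule is_bsubmod_bspan)
  have "formal_sums \<subseteq> U"
  proof
    fix v :: "'a \<Rightarrow> 'b" assume v: "v \<in> formal_sums"
    have "delta x b \<in> U" if "x \<in> max_ideal" for x b
    proof (rule delta_in_bsubmod_of_generators[OF l U _ Gen(2) _ that])
      show "tensor_rels f \<subseteq> U" unfolding U_def using bspan_superset bspan_Un_superset1 by blast
      show "delta g 1 \<in> U" if "g \<in> Gen" for g unfolding U_def G_def using that
        by (intro in_bspan_UnI2) blast
    qed
    then have "(\<Sum>x\<in>supp v. delta x (v x)) \<in> U"
      using formal_sums_supp[OF v] by (intro bsubmod_sum[OF U]) blast
    then show "v \<in> U" using supp_decomposition[OF formal_sums_finite_supp[OF v]] by simp
  qed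
  moreover have "U \<subseteq> formal_sums" unfolding U_def
    using bspan_tensor_rels_formal_sums[OF l] GF by (intro bspan_least is_bsubmod_formal_sums) auto
  ultimately have "formal_sums = U" by blast
  moreover have "finite G" unfolding G_def using Gen(1) by simp
  ultimately show ?thesis using that GF unfolding U_def by blast
qed

lemma ker_reps_finitely_generated:
  assumes n: "noetherian_local_ring TYPE('a::comm_ring_1)" and l: "local_ring TYPE('b::comm_ring_1)"
    and f: "local_hom (f :: 'a \<Rightarrow> 'b)"
  obtains S where "finite S" "S \<subseteq> ker_reps f" "ker_reps f = bspan (bspan (tensor_rels f) \<union> S)"
proof -
  have la: "local_ring TYPE('a)" using n by (simp add: noetherian_local_ring_def)
  obtain G where "finite G" "G \<subseteq> (formal_sums :: ('a \<Rightarrow> 'b) set)"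
    "formal_sums = bspan (bspan (tensor_rels f) \<union> G)"
    using formal_sums_finitely_generated[OF n] by blast
  then obtain B where "B \<subseteq> ker_reps f" "indep_mod (bspan (tensor_rels f)) B"
      "ker_reps f = bspan (bspan (tensor_rels f) \<union> B)"
    using indep_mod_extend[OF l max_ideal_annihilates_formal_sums[OF la l]
        bspan_tensor_rels_ker_reps[OF la f]
        is_bsubmod_ker_reps ker_reps_formal_sums _ _ _ indep_mod_empty] ker_reps_formal_sums
    by (metis empty_subsetI)
  then show ?thesis using that indep_mod_finite by blast
qed

definition pushforward :: "('a \<Rightarrow> 'b) \<Rightarrow> ('a \<Rightarrow> 'c::comm_ring_1) \<Rightarrow> ('b \<Rightarrow> 'c)" where
  "pushforward h f = (\<Sum>x\<in>supp f. delta (h x) (f x))"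

lemma pushforward_superset: "finite T \<Longrightarrow> supp f \<subseteq> T \<Longrightarrow> pushforward h f = (\<Sum>x\<in>T. delta (h x) (f x))"
  unfolding pushforward_def by (rule sum.mono_neutral_left) (auto simp: supp_def)

lemma pushforward_add:
  "finite (supp f) \<Longrightarrow> finite (supp g)
    \<Longrightarrow> pushforward h (f + g) = pushforward h f + pushforward h g"
proof -
  assume f: "finite (supp f)" and g: "finite (supp g)"
  let ?T = "supp f \<union> supp g"
  have "pushforward h (f + g) = (\<Sum>x\<in>?T. delta (h x) ((f + g) x))"
    using f g supp_add[of f g] by (intro pushforward_superset) auto
  also have "\<dots> = (\<Sum>x\<in>?T. delta (h x) (f x)) + (\<Sum>x\<in>?T. delta (h x) (g x))"
    by (simp add: delta_add sum.distrib)
  also have "(\<Sum>x\<in>?T. delta (h x) (f x)) = pushforward h f" by (rule pushforward_superset[symmetric])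
    (use f g in auto)
  also have "(\<Sum>x\<in>?T. delta (h x) (g x)) = pushforward h g" by (rule pushforward_superset[symmetric])
    (use f g in auto)
  finally show ?thesis .
qed

lemma pushforward_smul: "finite (supp f) \<Longrightarrow> pushforward h (smul c f) = smul c (pushforward h f)"
proof -
  assume f: "finite (supp f)"
  have "pushforward h (smul c f) = (\<Sum>x\<in>supp f. delta (h x) (smul c f x))"
    using f supp_smul[of c f] by (intro pushforward_superset) auto
  also have "\<dots> = smul c (pushforward h f)"
    by (simp add: pushforward_def smul_sum_right smul_delta smul_apply)
  finally show ?thesis .
qed

lemma pushforward_zero[simp]: "pushforward h 0 = 0" by (simp add: pushforward_def)

lemma pushforward_uminus: "finite (supp f) \<Longrightarrow> pushforward h (- f) = - pushforward h f"
  using pushforward_smul[of f h "-1"] by (metis smul_one smul_uminus_left)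

lemma pushforward_diff:
  "finite (supp f) \<Longrightarrow> finite (supp g)
    \<Longrightarrow> pushforward h (f - g) = pushforward h f - pushforward h g"
  using pushforward_add[of f "- g" h] pushforward_uminus[of g h] by simp

lemma pushforward_delta: "pushforward h (delta x b) = delta (h x) b"
  using pushforward_superset[of "{x}" "delta x b" h] supp_delta[of x b] by (simp add: delta_def)

lemma pushforward_sum:
  "(\<And>i. i \<in> A \<Longrightarrow> finite (supp (f i)))
    \<Longrightarrow> pushforward h (\<Sum>i\<in>A. f i) = (\<Sum>i\<in>A. pushforward h (f i))"
  by (induction A rule: infinite_finite_induct) (auto simp: pushforward_add finite_supp_sum)

lemma pushforward_apply: "pushforward h f y = (\<Sum>x\<in>supp f. if h x = y then f x else 0)"
  by (simp add: pushforward_def sum_apply delta_def eq_commute)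

lemma supp_pushforward: "supp (pushforward h f) \<subseteq> h ` supp f"
proof
  fix y assume "y \<in> supp (pushforward h f)"
  then have "(\<Sum>x\<in>supp f. if h x = y then f x else 0) \<noteq> 0" by (simp add: supp_def pushforward_apply)
  then obtain x where x: "x \<in> supp f" "(if h x = y then f x else 0) \<noteq> 0"
    by (rule sum.not_neutral_contains_not_neutral)
  then have "h x = y" by (auto split: if_splits)
  then show "y \<in> h ` supp f" using x(1) by blast
qed

lemma finite_supp_pushforward: "finite (supp f) \<Longrightarrow> finite (supp (pushforward h f))"
  by (rule finite_subset[OF supp_pushforward]) simp

lemma nat_map_pushforward: "finite (supp f) \<Longrightarrow> nat_map g (pushforward h f) = nat_map (g \<circ> h) f"
proof -
  assume f: "finite (supp f)"
  have "nat_map g (pushforward h f) = (\<Sum>x\<in>supp f. nat_map g (delta (h x) (f x)))"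
    unfolding pushforward_def by (rule nat_map_sum) (rule finite_supp_delta)
  also have "\<dots> = (\<Sum>x\<in>supp f. g (h x) * f x)" by (simp add: nat_map_delta)
  also have "\<dots> = nat_map (g \<circ> h) f" by (simp add: nat_map_def)
  finally show ?thesis .
qed

lemma pushforward_pushforward:
  "finite (supp f) \<Longrightarrow> pushforward g (pushforward h f) = pushforward (g \<circ> h) f"
proof -
  have "pushforward g (pushforward h f) = (\<Sum>x\<in>supp f. pushforward g (delta (h x) (f x)))"
    unfolding pushforward_def[of h] by (rule pushforward_sum) (rule finite_supp_delta)
  also have "\<dots> = (\<Sum>x\<in>supp f. delta (g (h x)) (f x))" by (simp add: pushforward_delta)
  also have "\<dots> = pushforward (g \<circ> h) f" by (simp add: pushforward_def)
  finally show ?thesis .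
qed

lemma ring_hom_o_add: "ring_hom p \<Longrightarrow> p \<circ> (f + g) = (p \<circ> f) + (p \<circ> g)"
  by (rule ext) (simp add: ring_hom_add)
lemma ring_hom_o_diff: "ring_hom p \<Longrightarrow> p \<circ> (f - g) = (p \<circ> f) - (p \<circ> g)"
  by (rule ext) (simp add: ring_hom_diff)
lemma ring_hom_o_smul: "ring_hom p \<Longrightarrow> p \<circ> (smul b f) = smul (p b) (p \<circ> f)"
  by (rule ext) (simp add: ring_hom_mult smul_apply)
lemma ring_hom_o_delta: "ring_hom p \<Longrightarrow> p \<circ> (delta x b) = delta x (p b)"
  by (rule ext) (simp add: delta_def ring_hom_zero)
lemma ring_hom_o_zero: "ring_hom p \<Longrightarrow> p \<circ> 0 = 0"
  by (rule ext) (simp add: ring_hom_zero)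
lemma ring_hom_o_sum: "ring_hom p \<Longrightarrow> p \<circ> (\<Sum>i\<in>A. f i) = (\<Sum>i\<in>A. p \<circ> f i)"
  by (rule ext) (simp add: sum_apply ring_hom_sum)
lemma supp_ring_hom_o: "ring_hom p \<Longrightarrow> supp (p \<circ> f) \<subseteq> supp f"
  by (auto simp: supp_def ring_hom_zero)
lemma ring_hom_o_formal_sums: "ring_hom p \<Longrightarrow> f \<in> formal_sums \<Longrightarrow> p \<circ> f \<in> formal_sums"
proof -
  assume p: "ring_hom p" and f: "f \<in> formal_sums"
  have "finite (supp (p \<circ> f))" using supp_ring_hom_o[OF p, of f] formal_sums_finite_supp[OF f]
    by (rule finite_subset)
  moreover have "supp (p \<circ> f) \<subseteq> max_ideal" using supp_ring_hom_o[OF p, of f] formal_sums_supp[OF f]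
    by (rule order_trans)
  ultimately show ?thesis unfolding formal_sums_def by blast
qed

lemma delta_zero_in_bspan_tensor_rels:
  assumes l: "local_ring TYPE('a::comm_ring_1)"
  shows "delta (0::'a) b \<in> bspan (tensor_rels (f :: 'a \<Rightarrow> 'b::comm_ring_1))"
  using ideal_zero[OF is_ideal_delta_support[OF l is_bsubmod_bspan bspan_superset]] by blast

lemma sum_delta_in_bspan_tensor_rels:
  assumes l: "local_ring TYPE('a::comm_ring_1)" and "finite T" and "\<And>x. x \<in> T \<Longrightarrow> u x \<in> max_ideal"
  shows "(\<Sum>x\<in>T. delta (u x) c) - delta (\<Sum>x\<in>T. u x :: 'a) c
    \<in> bspan (tensor_rels (f :: 'a \<Rightarrow> 'b::comm_ring_1))"
  using assms(2,3)
proof (induction T rule: finite_induct)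
  case empty
  show ?case
    using bsubmod_uminus[OF is_bsubmod_bspan delta_zero_in_bspan_tensor_rels[OF l]]
      by (simp only: sum.empty diff_0)
next
  case (insert x F)
  let ?R = "bspan (tensor_rels f)"
  have "(\<Sum>x\<in>F. u x) \<in> max_ideal" by (rule ideal_sum[OF is_ideal_max_ideal[OF l]])
    (use insert.prems in blast)
  then have "delta (u x + (\<Sum>x\<in>F. u x)) c - delta (u x) c - delta (\<Sum>x\<in>F. u x) c \<in> ?R"
    using additivity_rel insert.prems bspan_superset by blast
  moreover have "(\<Sum>x\<in>F. delta (u x) c) - delta (\<Sum>x\<in>F. u x) c \<in> ?R"
    using insert.IH insert.prems by blast
  ultimately have "((\<Sum>x\<in>F. delta (u x) c) - delta (\<Sum>x\<in>F. u x) c)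
      - (delta (u x + (\<Sum>x\<in>F. u x)) c - delta (u x) c - delta (\<Sum>x\<in>F. u x) c) \<in> ?R"
    using bsubmod_diff[OF is_bsubmod_bspan] by blast
  moreover have "(\<Sum>x\<in>insert x F. delta (u x) c) - delta (\<Sum>x\<in>insert x F. u x) c
      = ((\<Sum>x\<in>F. delta (u x) c) - delta (\<Sum>x\<in>F. u x) c)
        - (delta (u x + (\<Sum>x\<in>F. u x)) c - delta (u x) c - delta (\<Sum>x\<in>F. u x) c)"
    using insert.hyps by (simp add: algebra_simps)
  ultimately show ?case by (simp only:)
qed

lemma delta_square_in_bspan_tensor_rels:
  assumes l: "local_ring TYPE('a::comm_ring_1)" and f: "local_hom (f :: 'a \<Rightarrow> 'b::comm_ring_1)"
    and z: "z \<in> ideal_prod max_ideal max_ideal"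
  shows "delta z (1::'b) \<in> bspan (tensor_rels f)"
proof -
  let ?R = "bspan (tensor_rels f)"
  have "x * y \<in> {x \<in> max_ideal. \<forall>b. delta x b \<in> ?R}" if xy: "x \<in> max_ideal" "y \<in> max_ideal" for x y
  proof -
    \<comment> \<open>\<open>xy \<otimes> b = y \<otimes> f x b\<close>, which vanishes since \<open>f x\<close> lies in the maximal ideal\<close>
    have "delta y (f x) \<in> ?R"
      using residue_rel[OF xy(2) local_hom_max_ideal[OF f xy(1)]] bspan_superset by blast
    then have "delta y (f x * b) \<in> ?R" for b
      using bsubmod_smul[OF is_bsubmod_bspan, of "delta y (f x)" _ b]
      by (simp add: smul_delta mult.commute)
    moreover have "delta (x * y) b - delta y (f x * b) \<in> ?R" for b
      using balancing_rel[OF xy(2)] bspan_superset by blast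
    ultimately have "(delta (x * y) b - delta y (f x * b)) + delta y (f x * b) \<in> ?R" for b
      by (intro bsubmod_add[OF is_bsubmod_bspan])
    then show ?thesis using xy ideal_mult_left[OF is_ideal_max_ideal[OF l]] by simp
  qed
  then have "ideal_prod max_ideal max_ideal \<subseteq> {x \<in> max_ideal. \<forall>b. delta x b \<in> ?R}"
    unfolding ideal_prod_def
    by (intro ideal_gen_least is_ideal_delta_support[OF l is_bsubmod_bspan bspan_superset]) blast
  then show ?thesis using z by blast
qed

section \<open>Composition with a surjective local homomorphism\<close>

locale surjective_composition =
  fixes \<phi> :: "'a::comm_ring_1 \<Rightarrow> 'b::comm_ring_1" and \<psi> :: "'b \<Rightarrow> 'c::comm_ring_1"
  assumes noetherian_A: "noetherian_local_ring TYPE('a)"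
    and noetherian_B: "noetherian_local_ring TYPE('b)"
    and local_C: "local_ring TYPE('c)" and local_hom_\<phi>: "local_hom \<phi>" and local_hom_\<psi>: "local_hom \<psi>"
    and surj_\<phi>: "surj \<phi>"
begin

abbreviation "\<chi> \<equiv> \<psi> \<circ> \<phi>"
abbreviation "mA \<equiv> (max_ideal :: 'a set)"
abbreviation "mB \<equiv> (max_ideal :: 'b set)"
abbreviation "mC \<equiv> (max_ideal :: 'c set)"
abbreviation "R\<phi> \<equiv> bspan (tensor_rels \<phi>)"
abbreviation "R\<psi> \<equiv> bspan (tensor_rels \<psi>)"
abbreviation "R\<chi> \<equiv> bspan (tensor_rels \<chi>)"
abbreviation "K\<phi> \<equiv> ker_reps \<phi>"
abbreviation "K\<psi> \<equiv> ker_reps \<psi>"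
abbreviation "K\<chi> \<equiv> ker_reps \<chi>"

lemma local_A: "local_ring TYPE('a)"
  using noetherian_A by (simp add: noetherian_local_ring_def)

lemma local_B: "local_ring TYPE('b)"
  using noetherian_B by (simp add: noetherian_local_ring_def)

lemma ring_hom_\<phi>: "ring_hom \<phi>"
  using local_hom_\<phi> local_hom_ring_hom by blast

lemma ring_hom_\<psi>: "ring_hom \<psi>"
  using local_hom_\<psi> local_hom_ring_hom by blast

lemma local_hom_\<chi>: "local_hom \<chi>"
  unfolding local_hom_def
  using ring_hom_comp[OF ring_hom_\<phi> ring_hom_\<psi>] local_hom_max_ideal[OF local_hom_\<phi>]
    local_hom_max_ideal[OF local_hom_\<psi>] by auto

lemma \<phi>_max_ideal_onto: "u \<in> mB \<Longrightarrow> \<exists>x\<in>mA. \<phi> x = u"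
proof -
  assume u: "u \<in> mB"
  obtain x where x: "\<phi> x = u" using surj_\<phi> by (metis surjD)
  have "x \<in> mA"
  proof (rule ccontr)
    assume "x \<notin> mA"
    then obtain v where "v * x = 1" using notin_max_ideal_imp_unit[OF local_A] by blast
    then have "\<phi> v * u = 1" using x ring_hom_mult[OF ring_hom_\<phi>, of v x] ring_hom_one[OF ring_hom_\<phi>]
      by simp
    then show False using unit_notin_max_ideal[OF local_B] u by blast
  qed
  then show ?thesis using x by blast
qed

definition lift :: "'b \<Rightarrow> 'a" where
  "lift u = (SOME x. x \<in> mA \<and> \<phi> x = u)"

lemma lift: "u \<in> mB \<Longrightarrow> lift u \<in> mA \<and> \<phi> (lift u) = u"
  unfolding lift_def by (rule someI_ex) (use \<phi>_max_ideal_onto in blast)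

lemma pushforward_formal_sums: "f \<in> formal_sums \<Longrightarrow> pushforward \<phi> (f :: 'a \<Rightarrow> 'c) \<in> formal_sums"
proof -
  assume f: "f \<in> formal_sums"
  have "supp (pushforward \<phi> f) \<subseteq> \<phi> ` supp f" by (rule supp_pushforward)
  also have "\<dots> \<subseteq> mB" using formal_sums_supp[OF f] local_hom_max_ideal[OF local_hom_\<phi>] by blast
  finally show ?thesis
    unfolding formal_sums_def using finite_supp_pushforward[OF formal_sums_finite_supp[OF f]]
      by blast
qed

lemma pushforward_tensor_rels: "g \<in> tensor_rels \<chi> \<Longrightarrow> pushforward \<phi> g \<in> tensor_rels \<psi>"
proof -
  assume "g \<in> tensor_rels \<chi>"
  then show ?thesis
  proof (cases rule: tensor_rels_cases)
    case (1 x y b)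
    have "pushforward \<phi> g = delta (\<phi> x + \<phi> y) b - delta (\<phi> x) b - delta (\<phi> y) b"
      unfolding 1 by (simp add: pushforward_diff finite_supp_diff finite_supp_delta pushforward_delta
          ring_hom_add[OF ring_hom_\<phi>])
    then show ?thesis using additivity_rel local_hom_max_ideal[OF local_hom_\<phi>] 1 by metis
  next
    case (2 a x b)
    have "pushforward \<phi> g = delta (\<phi> a * \<phi> x) b - delta (\<phi> x) (\<psi> (\<phi> a) * b)"
      unfolding 2 by (simp add: pushforward_diff finite_supp_diff finite_supp_delta pushforward_delta
          ring_hom_mult[OF ring_hom_\<phi>])
    then show ?thesis using balancing_rel local_hom_max_ideal[OF local_hom_\<phi>] 2 by metis
  next
    case (3 x b)
    have "pushforward \<phi> g = delta (\<phi> x) b" unfolding 3 by (rule pushforward_delta)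
    then show ?thesis using residue_rel local_hom_max_ideal[OF local_hom_\<phi>] 3 by metis
  qed
qed

lemma pushforward_bspan_tensor_rels: "f \<in> R\<chi> \<Longrightarrow> pushforward \<phi> f \<in> R\<psi>"
proof -
  define U where "U = {f \<in> formal_sums. pushforward \<phi> f \<in> R\<psi>}"
  have "bmod_surjection (pushforward \<phi>) formal_sums (pushforward \<phi> ` formal_sums)"
    by unfold_locales (auto simp: is_bsubmod_formal_sums pushforward_add pushforward_smul formal_sums_finite_supp)
  then have "is_bsubmod U"
    unfolding U_def by (rule bmod_surjection.is_bsubmod_preimage[OF _ is_bsubmod_bspan])
  moreover have "tensor_rels \<chi> \<subseteq> U"
    unfolding U_def using tensor_rels_formal_sums[OF local_A] pushforward_tensor_rels bspan_superset
      by blast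
  ultimately have "R\<chi> \<subseteq> U" by (rule bspan_least)
  then show "f \<in> R\<chi> \<Longrightarrow> pushforward \<phi> f \<in> R\<psi>" unfolding U_def by blast
qed

lemma nat_map_pushforward_formal_sums:
  "f \<in> formal_sums \<Longrightarrow> nat_map \<psi> (pushforward \<phi> f) = nat_map \<chi> f"
  by (rule nat_map_pushforward[OF formal_sums_finite_supp])

lemma pushforward_ker_reps: "pushforward \<phi> ` K\<chi> = K\<psi>"
proof
  show "pushforward \<phi> ` K\<chi> \<subseteq> K\<psi>"
    unfolding ker_reps_def using pushforward_formal_sums nat_map_pushforward_formal_sums by auto
  show "K\<psi> \<subseteq> pushforward \<phi> ` K\<chi>"
  proof
    fix g assume g: "g \<in> K\<psi>"
    have gF: "g \<in> formal_sums" using g ker_reps_formal_sums by blast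
    define f where "f = (\<Sum>y\<in>supp g. delta (lift y) (g y))"
    have fF: "f \<in> formal_sums" unfolding f_def
      using lift formal_sums_supp[OF gF]
        by (intro bsubmod_sum[OF is_bsubmod_formal_sums] delta_in_formal_sums) blast
    have "pushforward \<phi> f = (\<Sum>y\<in>supp g. pushforward \<phi> (delta (lift y) (g y)))"
      unfolding f_def by (rule pushforward_sum) (rule finite_supp_delta)
    also have "\<dots> = (\<Sum>y\<in>supp g. delta y (g y))"
      by (rule sum.cong) (use lift formal_sums_supp[OF gF] in \<open>auto simp: pushforward_delta\<close>)
    also have "\<dots> = g" using supp_decomposition[OF formal_sums_finite_supp[OF gF]] by simp
    finally have pg: "pushforward \<phi> f = g" .
    then have "f \<in> K\<chi>" using g fF nat_map_pushforward_formal_sums[OF fF] unfolding ker_reps_def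
      by simp
    then show "g \<in> pushforward \<phi> ` K\<chi>" using pg by blast
  qed
qed

text \<open>Representatives of the kernel of the surjection \<open>K\<chi>/R\<chi> \<rightarrow> K\<psi>/R\<psi>\<close> induced by pushing
  forward along \<open>\<phi>\<close>.\<close>
definition push_ker :: "('a \<Rightarrow> 'c) set" where
  "push_ker = {f \<in> K\<chi>. pushforward \<phi> f \<in> R\<psi>}"

lemma bmod_surjection_pushforward: "bmod_surjection (pushforward \<phi>) K\<chi> K\<psi>"
  by unfold_locales
    (auto simp: is_bsubmod_ker_reps pushforward_add pushforward_smul ker_reps_finite_supp
      pushforward_ker_reps)

lemma min_gens_push_ker: "min_gens K\<chi> push_ker = min_gens K\<psi> R\<psi>"
proof -
  obtain G where "finite G" "G \<subseteq> K\<psi>" "K\<psi> = bspan (R\<psi> \<union> G)"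
    using ker_reps_finitely_generated[OF noetherian_B local_C local_hom_\<psi>] by blast
  then show ?thesis
    unfolding push_ker_def
    by (rule bmod_surjection.min_gens_preimage[OF bmod_surjection_pushforward is_bsubmod_bspan
          bspan_tensor_rels_ker_reps[OF local_B local_hom_\<psi>]])
qed

lemma is_bsubmod_push_ker: "is_bsubmod push_ker"
  unfolding push_ker_def
  by (rule bmod_surjection.is_bsubmod_preimage[OF bmod_surjection_pushforward is_bsubmod_bspan])

lemma bspan_tensor_rels_push_ker: "R\<chi> \<subseteq> push_ker"
  unfolding push_ker_def
    using bspan_tensor_rels_ker_reps[OF local_A local_hom_\<chi>] pushforward_bspan_tensor_rels
  by blast

lemma min_gens_K\<chi>_split: "min_gens K\<chi> R\<chi> = min_gens push_ker R\<chi> + min_gens K\<chi> push_ker"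
proof -
  obtain G where "finite G" "G \<subseteq> K\<chi>" "K\<chi> = bspan (R\<chi> \<union> G)"
    using ker_reps_finitely_generated[OF noetherian_A local_C local_hom_\<chi>] by blast
  then show ?thesis
    using min_gens_add[OF local_C max_ideal_annihilates_ker_reps[OF local_A local_C]
        is_bsubmod_ker_reps
        is_bsubmod_push_ker bspan_tensor_rels_push_ker] push_ker_def by blast
qed

lemma ring_hom_o_ker_reps: "s \<in> K\<phi> \<Longrightarrow> \<psi> \<circ> s \<in> push_ker"
proof -
  assume s: "s \<in> K\<phi>"
  have sF: "s \<in> formal_sums" using s ker_reps_formal_sums by blast
  have fin: "finite (supp s)" using formal_sums_finite_supp[OF sF] .
  have mem: "\<phi> x \<in> mB" "s x * \<phi> x \<in> mB" if "x \<in> supp s" for x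
    using that formal_sums_supp[OF sF] local_hom_max_ideal[OF local_hom_\<phi>]
      ideal_mult_left[OF is_ideal_max_ideal[OF local_B]]
    by blast+
  have cF: "\<psi> \<circ> s \<in> formal_sums" using ring_hom_o_formal_sums[OF ring_hom_\<psi> sF] .
  \<comment> \<open>Modulo \<open>R\<psi>\<close>, \<open>\<phi> x \<otimes> \<psi> (s x) = (s x * \<phi> x) \<otimes> 1\<close>, and these add up to \<open>nat_map \<phi> s \<otimes> 1\<close>,
    which vanishes because \<open>nat_map \<phi> s\<close> lies in \<open>mB\<^sup>2\<close>.\<close>
  let ?\<Sigma> = "\<Sum>x\<in>supp s. delta (s x * \<phi> x) (1::'c)"
  have "pushforward \<phi> (\<psi> \<circ> s) = (\<Sum>x\<in>supp s. delta (\<phi> x) (\<psi> (s x)))"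
    using supp_ring_hom_o[OF ring_hom_\<psi>, of s] fin by (simp add: pushforward_superset)
  also have "\<dots> = ?\<Sigma> - (\<Sum>x\<in>supp s. delta (s x * \<phi> x) 1 - delta (\<phi> x) (\<psi> (s x) * 1))"
    by (simp add: sum_subtractf)
  finally have eq: "pushforward \<phi> (\<psi> \<circ> s)
      = ?\<Sigma> - (\<Sum>x\<in>supp s. delta (s x * \<phi> x) 1 - delta (\<phi> x) (\<psi> (s x) * 1))" .
  have "(\<Sum>x\<in>supp s. delta (s x * \<phi> x) 1 - delta (\<phi> x) (\<psi> (s x) * 1)) \<in> R\<psi>"
    using mem balancing_rel bspan_superset by (intro bsubmod_sum[OF is_bsubmod_bspan]) blast
  moreover have "?\<Sigma> \<in> R\<psi>"
  proof -
    have "(\<Sum>x\<in>supp s. s x * \<phi> x) = nat_map \<phi> s" by (simp add: nat_map_def mult.commute)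
    also have "\<dots> \<in> ideal_prod mB mB" using s by (simp add: ker_reps_def)
    finally have "delta (\<Sum>x\<in>supp s. s x * \<phi> x) (1::'c) \<in> R\<psi>"
      by (rule delta_square_in_bspan_tensor_rels[OF local_B local_hom_\<psi>])
    moreover have "?\<Sigma> - delta (\<Sum>x\<in>supp s. s x * \<phi> x) (1::'c) \<in> R\<psi>"
      using sum_delta_in_bspan_tensor_rels[OF local_B fin mem(2)] .
    ultimately have "(?\<Sigma> - delta (\<Sum>x\<in>supp s. s x * \<phi> x) 1) + delta (\<Sum>x\<in>supp s. s x * \<phi> x) 1 \<in> R\<psi>"
      by (intro bsubmod_add[OF is_bsubmod_bspan])
    then show ?thesis by simp
  qed
  ultimately have pR: "pushforward \<phi> (\<psi> \<circ> s) \<in> R\<psi>"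
    unfolding eq by (intro bsubmod_diff[OF is_bsubmod_bspan])
  then have "pushforward \<phi> (\<psi> \<circ> s) \<in> K\<psi>" using bspan_tensor_rels_ker_reps[OF local_B local_hom_\<psi>]
    by blast
  then have "\<psi> \<circ> s \<in> K\<chi>" using cF nat_map_pushforward_formal_sums[OF cF] unfolding ker_reps_def
    by simp
  then show ?thesis using pR unfolding push_ker_def by blast
qed

lemma ring_hom_o_tensor_rels: "g \<in> tensor_rels \<phi> \<Longrightarrow> \<psi> \<circ> g \<in> tensor_rels \<chi>"
proof -
  assume "g \<in> tensor_rels \<phi>"
  then show ?thesis
  proof (cases rule: tensor_rels_cases)
    case (1 x y b)
    have "\<psi> \<circ> g = delta (x + y) (\<psi> b) - delta x (\<psi> b) - delta y (\<psi> b)"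
      unfolding 1 by (simp add: ring_hom_o_diff[OF ring_hom_\<psi>] ring_hom_o_delta[OF ring_hom_\<psi>])
    then show ?thesis using additivity_rel 1 by metis
  next
    case (2 a x b)
    have "\<psi> \<circ> g = delta (a * x) (\<psi> b) - delta x (\<chi> a * \<psi> b)"
      unfolding 2
        by (simp add: ring_hom_o_diff[OF ring_hom_\<psi>] ring_hom_o_delta[OF ring_hom_\<psi>]
            ring_hom_mult[OF ring_hom_\<psi>])
    then show ?thesis using balancing_rel 2 by metis
  next
    case (3 x b)
    have "\<psi> \<circ> g = delta x (\<psi> b)" unfolding 3 by (rule ring_hom_o_delta[OF ring_hom_\<psi>])
    then show ?thesis using residue_rel 3 local_hom_max_ideal[OF local_hom_\<psi>] by metis
  qed
qed

lemma ring_hom_o_bspan_tensor_rels: "g \<in> R\<phi> \<Longrightarrow> \<psi> \<circ> g \<in> R\<chi>"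
proof -
  define U where "U = {g. \<psi> \<circ> g \<in> R\<chi>}"
  have "is_bsubmod U"
  proof (rule is_bsubmodI)
    show "0 \<in> U" unfolding U_def
      by (simp add: ring_hom_o_zero[OF ring_hom_\<psi>] bsubmod_zero[OF is_bsubmod_bspan])
    fix f g assume "f \<in> U" "g \<in> U"
    then show "f + g \<in> U"
      unfolding U_def using ring_hom_o_add[OF ring_hom_\<psi>, of f g] bsubmod_add[OF is_bsubmod_bspan]
        by simp
  next
    fix c f assume "f \<in> U"
    then show "smul c f \<in> U"
      unfolding U_def using ring_hom_o_smul[OF ring_hom_\<psi>, of c f] bsubmod_smul[OF is_bsubmod_bspan]
        by simp
  qed
  moreover have "tensor_rels \<phi> \<subseteq> U" unfolding U_def using ring_hom_o_tensor_rels bspan_superset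
    by blast
  ultimately have "R\<phi> \<subseteq> U" by (rule bspan_least)
  then show "g \<in> R\<phi> \<Longrightarrow> \<psi> \<circ> g \<in> R\<chi>" unfolding U_def by blast
qed

definition ker_deltas :: "('a \<Rightarrow> 'c) set" where
  "ker_deltas = {delta x c | x c. x \<in> mA \<and> \<phi> x = 0}"

lemma bspan_ker_deltas_formal_sums: "bspan (R\<chi> \<union> ker_deltas) \<subseteq> formal_sums"
  unfolding ker_deltas_def
  using bspan_tensor_rels_formal_sums[OF local_A] delta_in_formal_sums
  by (intro bspan_least is_bsubmod_formal_sums) blast

lemma delta_diff_delta_lift:
  assumes x: "x \<in> mA"
  shows "delta x c - delta (lift (\<phi> x)) c \<in> bspan (R\<chi> \<union> ker_deltas)"
proof -
  let ?x' = "lift (\<phi> x)"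
  have x': "?x' \<in> mA" "\<phi> ?x' = \<phi> x" using lift local_hom_max_ideal[OF local_hom_\<phi> x] by auto
  have d: "x - ?x' \<in> mA" using ideal_diff[OF is_ideal_max_ideal[OF local_A] x x'(1)] .
  have "delta (?x' + (x - ?x')) c - delta ?x' c - delta (x - ?x') c \<in> bspan (R\<chi> \<union> ker_deltas)"
    using additivity_rel[OF x'(1) d] bspan_superset by (blast intro: in_bspan_UnI1)
  moreover have "delta (x - ?x') c \<in> bspan (R\<chi> \<union> ker_deltas)"
    unfolding ker_deltas_def using d x'(2) ring_hom_diff[OF ring_hom_\<phi>]
      by (intro in_bspan_UnI2) auto
  ultimately have "(delta x c - delta ?x' c - delta (x - ?x') c) + delta (x - ?x') c
      \<in> bspan (R\<chi> \<union> ker_deltas)"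
    by (intro bsubmod_add[OF is_bsubmod_bspan]) simp_all
  then show ?thesis by simp
qed

lemma pushforward_eq_0_imp_bspan_ker_deltas:
  assumes f: "f \<in> formal_sums" and p: "pushforward \<phi> f = 0"
  shows "f \<in> bspan (R\<chi> \<union> ker_deltas)"
proof -
  have fin: "finite (supp f)" and sM: "supp f \<subseteq> mA" using f formal_sums_finite_supp formal_sums_supp
    by auto
  have "(\<Sum>x\<in>supp f. delta (lift (\<phi> x)) (f x)) = pushforward (lift \<circ> \<phi>) f"
    by (simp add: pushforward_def)
  also have "\<dots> = pushforward lift (pushforward \<phi> f)"
    by (rule pushforward_pushforward[symmetric, OF fin])
  also have "\<dots> = 0" using p by simp
  finally have zero: "(\<Sum>x\<in>supp f. delta (lift (\<phi> x)) (f x)) = 0" .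
  have "(\<Sum>x\<in>supp f. delta x (f x) - delta (lift (\<phi> x)) (f x)) \<in> bspan (R\<chi> \<union> ker_deltas)"
    using sM delta_diff_delta_lift by (intro bsubmod_sum[OF is_bsubmod_bspan]) blast
  also have "(\<Sum>x\<in>supp f. delta x (f x) - delta (lift (\<phi> x)) (f x)) = f"
    using zero supp_decomposition[OF fin] by (simp add: sum_subtractf)
  finally show ?thesis .
qed

lemma bspan_tensor_rels_\<psi>_subset_image: "R\<psi> \<subseteq> pushforward \<phi> ` bspan (R\<chi> \<union> ker_deltas)"
proof (rule bspan_least)
  let ?S = "bspan (R\<chi> \<union> ker_deltas)"
  have fin: "finite (supp f)" if "f \<in> ?S" for f
    using that bspan_ker_deltas_formal_sums formal_sums_finite_supp by blast
  have "bmod_surjection (pushforward \<phi>) ?S (pushforward \<phi> ` ?S)"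
    by unfold_locales (auto simp: is_bsubmod_bspan pushforward_add pushforward_smul fin)
  then show "is_bsubmod (pushforward \<phi> ` ?S)" by (rule bmod_surjection.is_bsubmod_image)
  show "tensor_rels \<psi> \<subseteq> pushforward \<phi> ` ?S"
  proof
    have rel: "g \<in> ?S" if "g \<in> tensor_rels \<chi>" for g
      using that bspan_superset by (blast intro: in_bspan_UnI1)
    fix g assume "g \<in> tensor_rels \<psi>"
    then show "g \<in> pushforward \<phi> ` ?S"
    proof (cases rule: tensor_rels_cases)
      case (1 u v b)
      define h where "h = delta (lift u + lift v) b - delta (lift u) b - delta (lift v) b"
      have "h \<in> ?S" unfolding h_def using lift 1 by (intro rel additivity_rel) auto
      moreover have "pushforward \<phi> h = g" unfolding h_def 1 using lift 1
        by (simp add: pushforward_diff finite_supp_diff finite_supp_delta pushforward_delta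
            ring_hom_add[OF ring_hom_\<phi>])
      ultimately show ?thesis by blast
    next
      case (2 a u b)
      obtain a' where a': "\<phi> a' = a" using surj_\<phi> by (metis surjD)
      define h where "h = delta (a' * lift u) b - delta (lift u) (\<chi> a' * b)"
      have "h \<in> ?S" unfolding h_def using lift 2 by (intro rel balancing_rel) auto
      moreover have "pushforward \<phi> h = g" unfolding h_def 2 using lift 2 a'
        by (simp add: pushforward_diff finite_supp_diff finite_supp_delta pushforward_delta
            ring_hom_mult[OF ring_hom_\<phi>])
      ultimately show ?thesis by blast
    next
      case (3 u b)
      have "delta (lift u) b \<in> ?S" using lift 3 by (intro rel residue_rel) auto
      moreover have "pushforward \<phi> (delta (lift u) b) = g" unfolding 3 using lift 3
        by (simp add: pushforward_delta)
      ultimately show ?thesis by blast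
    qed
  qed
qed

lemma push_ker_subset_bspan_ker_deltas: "push_ker \<subseteq> bspan (R\<chi> \<union> ker_deltas)"
proof
  fix f assume "f \<in> push_ker"
  then have fF: "f \<in> formal_sums" and "pushforward \<phi> f \<in> R\<psi>"
    unfolding push_ker_def using ker_reps_formal_sums by blast+
  then have "pushforward \<phi> f \<in> pushforward \<phi> ` bspan (R\<chi> \<union> ker_deltas)"
    using bspan_tensor_rels_\<psi>_subset_image by blast
  then obtain h where h: "h \<in> bspan (R\<chi> \<union> ker_deltas)" "pushforward \<phi> h = pushforward \<phi> f"
    by (metis imageE)
  have hF: "h \<in> formal_sums" using h bspan_ker_deltas_formal_sums by blast
  have "pushforward \<phi> (f - h) = 0"
    using h(2) pushforward_diff[where h=\<phi>, OF formal_sums_finite_supp[OF fF]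
        formal_sums_finite_supp[OF hF]]
    by simp
  then have "f - h \<in> bspan (R\<chi> \<union> ker_deltas)"
    by (rule pushforward_eq_0_imp_bspan_ker_deltas[OF
          bsubmod_diff[OF is_bsubmod_formal_sums fF hF]])
  then have "(f - h) + h \<in> bspan (R\<chi> \<union> ker_deltas)" using h(1)
    by (rule bsubmod_add[OF is_bsubmod_bspan])
  then show "f \<in> bspan (R\<chi> \<union> ker_deltas)" by simp
qed

lemma ker_deltas_subset_bspan:
  assumes S: "finite S" "S \<subseteq> K\<phi>" "K\<phi> = bspan (R\<phi> \<union> S)"
  shows "ker_deltas \<subseteq> bspan (R\<chi> \<union> (\<lambda>s. \<psi> \<circ> s) ` S)"
proof
  let ?U = "bspan (R\<chi> \<union> (\<lambda>s. \<psi> \<circ> s) ` S)"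
  fix g assume "g \<in> ker_deltas"
  then obtain x c where g: "g = delta x c" "x \<in> mA" "\<phi> x = 0" unfolding ker_deltas_def by blast
  have "nat_map \<phi> (delta x (1::'b)) = 0" using g by (simp add: nat_map_delta)
  then have "delta x (1::'b) \<in> K\<phi>"
    unfolding ker_reps_def
      by (simp add: delta_in_formal_sums[OF g(2)] ideal_zero[OF is_ideal_ideal_prod])
  then obtain r k where r: "r \<in> R\<phi>" and rk: "delta x (1::'b) = r + (\<Sum>s\<in>S. smul (k s) s)"
    using S(3) mem_bspan_Un_iff[OF is_bsubmod_bspan S(1)] by blast
  have "delta x (1::'c) = \<psi> \<circ> delta x (1::'b)"
    by (simp add: ring_hom_o_delta[OF ring_hom_\<psi>] ring_hom_one[OF ring_hom_\<psi>])
  also have "\<dots> = (\<psi> \<circ> r) + (\<Sum>s\<in>S. smul (\<psi> (k s)) (\<psi> \<circ> s))"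
    unfolding rk ring_hom_o_add[OF ring_hom_\<psi>] ring_hom_o_sum[OF ring_hom_\<psi>]
      ring_hom_o_smul[OF ring_hom_\<psi>] ..
  also have "\<dots> \<in> ?U"
  proof (rule bsubmod_add[OF is_bsubmod_bspan])
    show "\<psi> \<circ> r \<in> ?U" using ring_hom_o_bspan_tensor_rels[OF r] by (rule in_bspan_UnI1)
    show "(\<Sum>s\<in>S. smul (\<psi> (k s)) (\<psi> \<circ> s)) \<in> ?U"
      by (intro bsubmod_sum[OF is_bsubmod_bspan] bsubmod_smul[OF is_bsubmod_bspan] in_bspan_UnI2)
        blast
  qed
  finally have "smul c (delta x (1::'c)) \<in> ?U" by (rule bsubmod_smul[OF is_bsubmod_bspan])
  then show "g \<in> ?U" using g(1) by (simp add: smul_delta)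
qed

lemma nat_map_o_tensor_rels:
  assumes coord: "\<And>g. g \<in> R\<phi> \<Longrightarrow> nat_map coord g \<in> mB" and g: "g \<in> tensor_rels \<chi>"
  shows "nat_map (\<psi> \<circ> coord) g \<in> mC"
proof -
  have mC: "is_ideal mC" by (rule is_ideal_max_ideal[OF local_C])
  have \<psi>: "\<psi> x \<in> mC" if "x \<in> mB" for x using local_hom_max_ideal[OF local_hom_\<psi> that] .
  from g show ?thesis
  proof (cases rule: tensor_rels_cases)
    case (1 x y b)
    have "nat_map (\<psi> \<circ> coord) g = \<psi> (coord (x + y)) * b - \<psi> (coord x) * b - \<psi> (coord y) * b"
      unfolding 1 by (simp add: nat_map_diff finite_supp_diff finite_supp_delta nat_map_delta)
    also have "\<dots> = \<psi> (coord (x + y) - coord x - coord y) * b"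
      by (simp add: ring_hom_diff[OF ring_hom_\<psi>] ring_hom_add[OF ring_hom_\<psi>] algebra_simps)
    finally have eq: "nat_map (\<psi> \<circ> coord) g = \<psi> (coord (x + y) - coord x - coord y) * b" .
    have "nat_map coord (delta (x + y) 1 - delta x 1 - delta y 1) \<in> mB"
      using coord additivity_rel[OF 1(1,2), of 1 \<phi>] bspan_superset by blast
    then have "coord (x + y) - coord x - coord y \<in> mB"
      by (simp add: nat_map_diff finite_supp_diff finite_supp_delta nat_map_delta)
    then show ?thesis unfolding eq using \<psi> ideal_mult_right[OF mC] by blast
  next
    case (2 a x b)
    have "nat_map (\<psi> \<circ> coord) g = \<psi> (coord (a * x)) * b - \<psi> (coord x) * (\<psi> (\<phi> a) * b)"
      unfolding 2 by (simp add: nat_map_diff finite_supp_diff finite_supp_delta nat_map_delta)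
    also have "\<dots> = \<psi> (coord (a * x) - coord x * \<phi> a) * b"
      by (simp add: ring_hom_diff[OF ring_hom_\<psi>] ring_hom_mult[OF ring_hom_\<psi>] algebra_simps)
    finally have eq: "nat_map (\<psi> \<circ> coord) g = \<psi> (coord (a * x) - coord x * \<phi> a) * b" .
    have "nat_map coord (delta (a * x) 1 - delta x (\<phi> a * 1)) \<in> mB"
      using coord balancing_rel[OF 2(1), of a 1 \<phi>] bspan_superset by blast
    then have "coord (a * x) - coord x * \<phi> a \<in> mB"
      by (simp add: nat_map_diff finite_supp_diff finite_supp_delta nat_map_delta)
    then show ?thesis unfolding eq using \<psi> ideal_mult_right[OF mC] by blast
  next
    case (3 x b)
    have "nat_map (\<psi> \<circ> coord) g = \<psi> (coord x) * b" unfolding 3 by (simp add: nat_map_delta)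
    then show ?thesis using 3 ideal_mult_left[OF mC] by simp
  qed
qed

lemma nat_map_o_bspan_tensor_rels:
  assumes coord: "\<And>g. g \<in> R\<phi> \<Longrightarrow> nat_map coord g \<in> mB" and g: "g \<in> R\<chi>"
  shows "nat_map (\<psi> \<circ> coord) g \<in> mC"
proof -
  have "R\<chi> \<subseteq> {g. finite (supp g) \<and> nat_map (\<psi> \<circ> coord) g \<in> mC}"
    using tensor_rels_formal_sums[OF local_A] formal_sums_finite_supp
      nat_map_o_tensor_rels[OF coord]
    by (intro bspan_least is_bsubmod_nat_map_preimage is_ideal_max_ideal[OF local_C]) blast
  then show ?thesis using g by blast
qed

lemma ring_hom_o_lin_comb_coeff:
  assumes B: "indep_mod R\<phi> B" "formal_sums = bspan (R\<phi> \<union> B)" and S: "S \<subseteq> B"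
    and c: "(\<Sum>s\<in>S. smul (c s) (\<psi> \<circ> s)) \<in> R\<chi>" and s0: "s0 \<in> S"
  shows "c s0 \<in> mC"
proof -
  have mC: "is_ideal mC" by (rule is_ideal_max_ideal[OF local_C])
  have fS: "finite S" using S indep_mod_finite[OF B(1)] finite_subset by blast
  have SF: "s \<in> formal_sums" if "s \<in> S" for s using that S B(2) in_bspan_UnI2 by blast
  obtain coord where coord: "\<And>g. g \<in> R\<phi> \<Longrightarrow> nat_map coord g \<in> mB"
    and dual: "\<And>s. s \<in> B \<Longrightarrow> nat_map coord s - (if s = s0 then 1 else 0) \<in> mB"
    using coordinate_functional[OF local_B is_bsubmod_bspan B(1) B(2), of mA s0]
      formal_sums_finite_supp formal_sums_supp delta_in_formal_sums S s0 by blast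
  have fin: "finite (supp (\<psi> \<circ> s))" if "s \<in> S" for s
    using SF[OF that] ring_hom_o_formal_sums[OF ring_hom_\<psi>] formal_sums_finite_supp by blast
  have o: "nat_map (\<psi> \<circ> coord) (\<psi> \<circ> s) = \<psi> (nat_map coord s)" if "s \<in> S" for s
  proof -
    have "nat_map (\<psi> \<circ> coord) (\<psi> \<circ> s) = (\<Sum>x\<in>supp s. \<psi> (coord x) * \<psi> (s x))"
      using supp_ring_hom_o[OF ring_hom_\<psi>, of s] formal_sums_finite_supp[OF SF[OF that]]
      by (simp add: nat_map_superset)
    also have "\<dots> = \<psi> (nat_map coord s)"
      by (simp add: nat_map_def ring_hom_sum[OF ring_hom_\<psi>] ring_hom_mult[OF ring_hom_\<psi>])
    finally show ?thesis .
  qed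
  have "nat_map (\<psi> \<circ> coord) (\<Sum>s\<in>S. smul (c s) (\<psi> \<circ> s)) = (\<Sum>s\<in>S. c s * \<psi> (nat_map coord s))"
    using fin o by (simp add: nat_map_sum finite_supp_smul nat_map_smul)
  then have L: "(\<Sum>s\<in>S. c s * \<psi> (nat_map coord s)) \<in> mC"
    using nat_map_o_bspan_tensor_rels[OF coord c] by simp
  have "c s0 = (\<Sum>s\<in>S. c s * \<psi> (if s = s0 then 1 else 0))"
    using fS s0
      by (simp add: ring_hom_one[OF ring_hom_\<psi>] ring_hom_zero[OF ring_hom_\<psi>] if_distrib[of \<psi>]
          if_distrib[of "(*) _"] sum.delta cong: if_cong)
  also have "\<dots> = (\<Sum>s\<in>S. c s * \<psi> (nat_map coord s))
      - (\<Sum>s\<in>S. c s * \<psi> (nat_map coord s - (if s = s0 then 1 else 0)))"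
    by (simp add: ring_hom_diff[OF ring_hom_\<psi>] right_diff_distrib sum_subtractf)
  also have "\<dots> \<in> mC"
    using S dual local_hom_max_ideal[OF local_hom_\<psi>]
    by (intro ideal_diff[OF mC L] ideal_sum[OF mC] ideal_mult_left[OF mC]) blast
  finally show ?thesis .
qed

lemma min_gens_push_ker_base_change: "min_gens push_ker R\<chi> = min_gens K\<phi> R\<phi>"
proof -
  obtain G where "finite G" "G \<subseteq> K\<phi>" "K\<phi> = bspan (R\<phi> \<union> G)"
    using ker_reps_finitely_generated[OF noetherian_A local_B local_hom_\<phi>] by blast
  then obtain S where S: "finite S" "card S = min_gens K\<phi> R\<phi>" "S \<subseteq> K\<phi>" "K\<phi> = bspan (R\<phi> \<union> S)"
    using min_gens_attained by blast
  have iS: "indep_mod R\<phi> S" using min_gens_indep_mod[OF local_B is_bsubmod_bspan S(1,3,4,2)] .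
  obtain G' where G': "finite G'" "G' \<subseteq> (formal_sums :: ('a \<Rightarrow> 'b) set)"
    "formal_sums = bspan (R\<phi> \<union> G')"
    using formal_sums_finitely_generated[OF noetherian_A] by blast
  have "S \<subseteq> formal_sums" using S(3) ker_reps_formal_sums by blast
  then obtain B where B: "S \<subseteq> B" "indep_mod R\<phi> B" "formal_sums = bspan (R\<phi> \<union> B)"
    using indep_mod_extend[OF local_B max_ideal_annihilates_formal_sums[OF local_A local_B]
        bspan_tensor_rels_formal_sums[OF local_A] is_bsubmod_formal_sums order_refl G'(1,2) _ iS]
      G'(3)
    by blast
  let ?T = "(\<lambda>s. \<psi> \<circ> s) ` S"
  have coeff: "c s0 \<in> mC" if "(\<Sum>s\<in>S. smul (c s) (\<psi> \<circ> s)) \<in> R\<chi>" "s0 \<in> S" for c s0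
    using ring_hom_o_lin_comb_coeff[OF B(2,3,1) that] .
  have inj: "inj_on (\<lambda>s. \<psi> \<circ> s) S" and indep: "indep_mod R\<chi> ?T"
    by (rule indep_mod_image[where R=R\<chi>, OF local_C S(1) is_bsubmod_bspan],
        rule coeff, assumption+)+
  have TW: "?T \<subseteq> push_ker" using ring_hom_o_ker_reps S(3) by blast
  have span: "push_ker = bspan (R\<chi> \<union> ?T)"
  proof
    have "bspan (R\<chi> \<union> ker_deltas) \<subseteq> bspan (R\<chi> \<union> ?T)"
      using ker_deltas_subset_bspan[OF S(1,3,4)] bspan_Un_superset1[of R\<chi> ?T]
      by (intro bspan_least is_bsubmod_bspan) blast
    then show "push_ker \<subseteq> bspan (R\<chi> \<union> ?T)" using push_ker_subset_bspan_ker_deltas by blast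
    show "bspan (R\<chi> \<union> ?T) \<subseteq> push_ker"
      using bspan_tensor_rels_push_ker TW by (intro bspan_least is_bsubmod_push_ker) blast
  qed
  have "max_ideal_annihilates push_ker R\<chi>"
    using max_ideal_annihilates_ker_reps[OF local_A local_C] unfolding push_ker_def
    by (rule max_ideal_annihilates_subset) blast
  then have "min_gens push_ker R\<chi> = card ?T" using min_gens_basis[OF local_C _ indep TW span]
    by blast
  then show ?thesis using card_image[OF inj] S(2) by simp
qed

lemma rd_comp: "rd \<chi> = rd \<phi> + rd \<psi>"
proof -
  have "rd \<chi> = min_gens K\<chi> R\<chi>" by (rule rd_eq_min_gens)
  also have "\<dots> = min_gens push_ker R\<chi> + min_gens K\<chi> push_ker" by (rule min_gens_K\<chi>_split)
  also have "\<dots> = min_gens K\<phi> R\<phi> + min_gens K\<psi> R\<psi>"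
    by (simp add: min_gens_push_ker_base_change min_gens_push_ker)
  also have "\<dots> = rd \<phi> + rd \<psi>" by (simp add: rd_eq_min_gens)
  finally show ?thesis .
qed

end

theorem corollary3p10:
  fixes \<phi> :: "'a::comm_ring_1 \<Rightarrow> 'b::comm_ring_1" and \<psi> :: "'b \<Rightarrow> 'c::comm_ring_1"
  assumes "noetherian_local_ring TYPE('a)"
    and "noetherian_local_ring TYPE('b)"
    and "noetherian_local_ring TYPE('c)"
    and "local_hom \<phi>" and "local_hom \<psi>"
    and "surj \<phi>"
  shows "rd (\<psi> \<circ> \<phi>) = rd \<phi> + rd \<psi>"
proof -
  interpret surjective_composition \<phi> \<psi>
    using assms by unfold_locales (simp_all add: noetherian_local_ring_def)
  show ?thesis by (rule rd_comp)
qed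

end
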